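(* Let $d\ge2$, $N\ge1$, $s\in\{0,1,\dots,N\}$ and $\mathbf{p}=(p_1,\dots,p_d)$ a probability vector with all $p_i>0$, and let $K$ be the generalized Ehrenfest urn model with these parameters. 1. $K$ has eigenvalue $\beta_n=\frac{(N-s)_{[n]}}{N_{[n]}}$, $0\le n\le N$, with multiplicity $\binom{d+n-2}{n}$ and corresponding eigenbasis $\{K_{\mathbf{n}}(\cdot;N,\mathbf{p})\}_{\mathbf{n}\in\mathbb{N}_0^{d-1},|\mathbf{n}|=n}$. In particular $\beta_0=1$ with multiplicity $1$ and $\beta_1=1-\frac{s}{N}$ with multiplicity $d-1$. 2. If the process starts from $\mathbf{x}\in\mathcal{X}_N^d$, the chi-square distance after $l$ steps is $\chi_{\mathbf{x}}^2(l)=\sum_{n=1}^N\beta_n^{2l}h_n(\mathbf{x},\mathbf{x})$.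
   Context: Notation: $|\mathbf{x}|=\sum_ix_i$, $|\mathbf{x}_j|=x_1+\dots+x_j$ ($|\mathbf{x}_0|=0$), $|\mathbf{p}^j|=p_j+\dots+p_d$; $a_{(k)}=a(a+1)\cdots(a+k-1)$, $a_{[k]}=a(a-1)\cdots(a-k+1)$, $a_{(0)}=a_{[0]}=1$. $\mathcal{X}_N^d=\{\mathbf{x}\in\mathbb{N}_0^d:|\mathbf{x}|=N\}$; $\mathcal{M}(\mathbf{x}\mid N,\mathbf{p})=\frac{N!}{x_1!\cdots x_d!}\prod_ip_i^{x_i}$. Generalized Ehrenfest urn model: $N$ indistinguishable balls in $d$ urns; at each step choose $s$ of the $N$ balls uniformly at random and redistribute each independently into urn $j$ with probability $p_j$; the state is the vector of urn counts. Its stationary distribution is $\mathcal{M}(\cdot\mid N,\mathbf{p})$. Univariate Krawtchouk polynomials: $K_n(x;M,q)=\sum_{j=0}^n\frac{(-n)_{(j)}(-x)_{(j)}}{(-M)_{(j)}j!\,q^j}$. Multivariate Krawtchouk polynomials: for $\mathbf{n}=(n_1,\dots,n_{d-1})\in\mathbb{N}_0^{d-1}$, $|\mathbf{n}|\le N$, $K_{\mathbf{n}}(\mathbf{x};N,\mathbf{p})=\frac{(-1)^{|\mathbf{n}|}}{N_{[|\mathbf{n}|]}}\prod_{j=1}^{d-1}(-N+|\mathbf{x}_{j-1}|+|\mathbf{n}^{j+1}|)_{(n_j)}K_{n_j}\big(x_j;N-|\mathbf{x}_{j-1}|-|\mathbf{n}^{j+1}|,\frac{p_j}{|\mathbf{p}^j|}\big)$,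 with $|\mathbf{n}^{j+1}|=n_{j+1}+\dots+n_{d-1}$, and each $(-M)_{(n_j)}K_{n_j}(\cdot;M,\cdot)$ read as a polynomial after termwise cancellation of $(-M)_{(j)}$. Kernel polynomials: $h_n(\mathbf{x},\mathbf{y})=\sum_{\mathbf{n}\in\mathbb{N}_0^{d-1},|\mathbf{n}|=n}\frac{K_{\mathbf{n}}(\mathbf{x};N,\mathbf{p})K_{\mathbf{n}}(\mathbf{y};N,\mathbf{p})}{\mathbf{E}_{\mathcal{M}(\cdot\mid N,\mathbf{p})}[K_{\mathbf{n}}(\mathbf{X};N,\mathbf{p})^2]}$. Chi-square distance: $\chi_{\mathbf{x}}^2(l)=\sum_{\mathbf{y}}\frac{[K^l(\mathbf{x},\mathbf{y})-\pi(\mathbf{y})]^2}{\pi(\mathbf{y})}$ with $\pi=\mathcal{M}(\cdot\mid N,\mathbf{p})$. *)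

theory Defs
  imports Complex_Main
begin

text \<open>Vectors are functions nat => nat (or real) indexed by 1..d, zero outside.\<close>

definition states :: "nat \<Rightarrow> nat \<Rightarrow> (nat \<Rightarrow> nat) set" where
  "states d N = {x. (\<forall>i. i \<notin> {1..d} \<longrightarrow> x i = 0) \<and> (\<Sum>i=1..d. x i) = N}"

definition prob_vec :: "nat \<Rightarrow> (nat \<Rightarrow> real) \<Rightarrow> bool" where
  "prob_vec d p \<longleftrightarrow> (\<forall>i\<in>{1..d}. p i > 0) \<and> (\<Sum>i=1..d. p i) = 1"

definition falling :: "real \<Rightarrow> nat \<Rightarrow> real" where
  "falling a k = (\<Prod>i<k. a - real i)"

definition multinom :: "nat \<Rightarrow> nat \<Rightarrow> (nat \<Rightarrow> real) \<Rightarrow> (nat \<Rightarrow> nat) \<Rightarrow> real" where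
  "multinom d N p x = fact N / (\<Prod>i=1..d. fact (x i)) * (\<Prod>i=1..d. p i ^ x i)"

text \<open>One-step transition kernel of the generalized Ehrenfest urn: choose s of the N balls
  uniformly (k_i balls from urn i, multivariate hypergeometric), redistribute them
  independently according to p (m_i balls into urn i, multinomial).\<close>
definition ehrenfest :: "nat \<Rightarrow> nat \<Rightarrow> nat \<Rightarrow> (nat \<Rightarrow> real) \<Rightarrow> (nat \<Rightarrow> nat) \<Rightarrow> (nat \<Rightarrow> nat) \<Rightarrow> real" where
  "ehrenfest d N s p x y =
     (\<Sum>k\<in>states d s. \<Sum>m\<in>states d s.
        if (\<forall>i. k i \<le> x i) \<and> (\<forall>i. x i - k i + m i = y i)
        then (\<Prod>i=1..d. real (x i choose k i)) / real (N choose s) * multinom d s p m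
        else 0)"

fun ehrenfest_pow :: "nat \<Rightarrow> nat \<Rightarrow> nat \<Rightarrow> (nat \<Rightarrow> real) \<Rightarrow> nat \<Rightarrow> (nat \<Rightarrow> nat) \<Rightarrow> (nat \<Rightarrow> nat) \<Rightarrow> real" where
  "ehrenfest_pow d N s p 0 x y = (if x = y then 1 else 0)"
| "ehrenfest_pow d N s p (Suc l) x y =
     (\<Sum>z\<in>states d N. ehrenfest_pow d N s p l x z * ehrenfest d N s p z y)"

text \<open>(-M)_(n) K_n(x; M, q), read as a polynomial after termwise cancellation:
  sum_j (-n)_(j) (-x)_(j) (-M+j)_(n-j) / (j! q^j).\<close>
definition kraw_scaled :: "nat \<Rightarrow> real \<Rightarrow> real \<Rightarrow> real \<Rightarrow> real" where
  "kraw_scaled n x M q =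
     (\<Sum>j=0..n. pochhammer (- real n) j * pochhammer (- x) j * pochhammer (- M + real j) (n - j)
                / (fact j * q ^ j))"

text \<open>Multivariate Krawtchouk polynomial K_n(x; N, p), n indexed by 1..d-1.\<close>
definition mkraw :: "nat \<Rightarrow> nat \<Rightarrow> (nat \<Rightarrow> real) \<Rightarrow> (nat \<Rightarrow> nat) \<Rightarrow> (nat \<Rightarrow> nat) \<Rightarrow> real" where
  "mkraw d N p n x =
     (-1) ^ (\<Sum>i=1..d-1. n i) / falling (real N) (\<Sum>i=1..d-1. n i) *
     (\<Prod>j=1..d-1.
        kraw_scaled (n j) (real (x j))
          (real N - real (\<Sum>i\<in>{1..<j}. x i) - real (\<Sum>i\<in>{j+1..d-1}. n i))
          (p j / (\<Sum>i=j..d. p i)))"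

definition kernel_poly :: "nat \<Rightarrow> nat \<Rightarrow> (nat \<Rightarrow> real) \<Rightarrow> nat \<Rightarrow> (nat \<Rightarrow> nat) \<Rightarrow> (nat \<Rightarrow> nat) \<Rightarrow> real" where
  "kernel_poly d N p n x y =
     (\<Sum>nn\<in>states (d-1) n. mkraw d N p nn x * mkraw d N p nn y /
        (\<Sum>z\<in>states d N. multinom d N p z * (mkraw d N p nn z)^2))"

definition chi_sq :: "nat \<Rightarrow> nat \<Rightarrow> nat \<Rightarrow> (nat \<Rightarrow> real) \<Rightarrow> (nat \<Rightarrow> nat) \<Rightarrow> nat \<Rightarrow> real" where
  "chi_sq d N s p x l =
     (\<Sum>y\<in>states d N. (ehrenfest_pow d N s p l x y - multinom d N p y)^2 / multinom d N p y)"

definition ehr_beta :: "nat \<Rightarrow> nat \<Rightarrow> nat \<Rightarrow> real" where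
  "ehr_beta N s n = falling (real N - real s) n / falling (real N) n"

end

theory Submission
  imports Defs "Jordan_Normal_Form.Determinant"
begin

text \<open>The multivariate Krawtchouk polynomial is a product of univariate ones, one per urn, each
  evaluated at the balls of its urn with parameter the number of balls not yet accounted for.
  Averaging a univariate Krawtchouk polynomial over binomially many added balls lowers its
  parameter by their number. Iterating this over the urns, one step of the chain (remove \<open>s\<close> balls
  hypergeometrically, redistribute them multinomially) turns the multinomial inner product of two
  product polynomials for \<open>N\<close> balls into the same inner product for \<open>N - s\<close> balls. As these inner
  products are orthogonal with norms proportional to \<open>N_[n]\<close>, the polynomials of degree \<open>n\<close> are
  eigenfunctions with eigenvalue \<open>(N - s)_[n] / N_[n]\<close>. There are as many of them as states, so
  they form a basis, the kernel and its powers expand spectrally, and the chi-square distance is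
  the weighted sum over the non-constant eigenfunctions.\<close>

section \<open>Falling factorials and univariate Krawtchouk polynomials\<close>

lemma falling_Suc: "falling x (Suc j) = falling x j * (x - real j)"
  by (simp add: falling_def)

lemma falling_add: "falling x (m + n) = falling x m * falling (x - real m) n"
  by (induction n) (simp_all add: falling_def algebra_simps)

lemma pochhammer_minus_falling: "pochhammer (- x) j = (-1) ^ j * falling x j"
  by (induction j) (simp_all add: falling_def pochhammer_Suc algebra_simps)

lemma falling_of_nat: "j \<le> x \<Longrightarrow> falling (real x) j = fact x / fact (x - j)"
proof (induction j)
  case 0
  then show ?case by (simp add: falling_def)
next
  case (Suc j)
  then have "x - j = Suc (x - Suc j)" by simp
  then have f: "fact (x - j) = real (x - j) * (fact (x - Suc j) :: real)" by (simp add: fact_Suc)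
  have "real (x - j) = real x - real j" "real (x - j) \<noteq> 0"
    using Suc by auto
  then show ?case
    using Suc unfolding f by (simp add: falling_Suc)
qed

lemma falling_of_nat_pos: "j \<le> x \<Longrightarrow> falling (real x) j > 0"
  by (simp add: falling_of_nat)

lemma falling_of_nat_eq_0: "x < j \<Longrightarrow> falling (real x) j = 0"
  unfolding falling_def by (auto intro!: prod_zero bexI[of _ x])

lemma binomial_mult_falling:
  "j \<le> x \<Longrightarrow> x \<le> L \<Longrightarrow>
   real (L choose x) * falling (real x) j = falling (real L) j * real ((L - j) choose (x - j))"
  by (simp add: falling_of_nat binomial_fact field_simps)

lemma binomial_mult_falling_diff:
  assumes "a \<le> L"
  shows "real (L choose a) * falling (real (L - a)) m = falling (real L) m * real ((L - m) choose a)"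
proof (cases "m \<le> L - a")
  case True
  have "real (L choose (L - a)) * falling (real (L - a)) m
      = falling (real L) m * real ((L - m) choose (L - a - m))"
    using binomial_mult_falling[of m "L - a" L] True by simp
  moreover have "L choose (L - a) = L choose a"
    using assms by (simp add: binomial_symmetric[symmetric])
  moreover have "(L - m) choose (L - a - m) = (L - m) choose a"
  proof -
    have "L - a - m = (L - m) - a"
      by simp
    then show ?thesis
      using binomial_symmetric[of a "L - m"] True assms by simp
  qed
  ultimately show ?thesis by simp
next
  case False
  then show ?thesis
    by (cases "m \<le> L") (auto simp: falling_of_nat_eq_0)
qed

definition kraw_coeff :: "nat \<Rightarrow> real \<Rightarrow> real \<Rightarrow> nat \<Rightarrow> real" where
  "kraw_coeff n M q j = pochhammer (- real n) j * pochhammer (- M + real j) (n - j) / (fact j * q ^ j)"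

lemma kraw_scaled_eq_sum_coeff:
  "kraw_scaled n x M q = (\<Sum>j=0..n. kraw_coeff n M q j * pochhammer (- x) j)"
  unfolding kraw_scaled_def kraw_coeff_def by (simp add: algebra_simps)

lemma kraw_coeff_above_degree: "kraw_coeff n M q (Suc n) = 0"
  unfolding kraw_coeff_def by (simp add: pochhammer_eq_0_iff)

lemma kraw_coeff_degree: "kraw_coeff n M q n = (-1) ^ n / q ^ n"
  unfolding kraw_coeff_def by (simp add: pochhammer_same)

lemma pochhammer_minus_one:
  "pochhammer (x - 1) j = pochhammer (x :: real) j - of_nat j * pochhammer x (j - 1)"
proof (cases j)
  case (Suc i)
  have "pochhammer (x - 1) (Suc i) = (x - 1) * pochhammer x i"
    by (simp add: pochhammer_rec)
  moreover have "pochhammer x (Suc i) = pochhammer x i * (x + of_nat i)"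
    by (simp add: pochhammer_Suc)
  ultimately show ?thesis
    using Suc by (simp add: algebra_simps)
qed simp

lemma kraw_coeff_recurrence:
  assumes "q \<noteq> 0" "i \<le> n"
  shows "kraw_coeff n M q i - q * of_nat (Suc i) * kraw_coeff n M q (Suc i) = kraw_coeff n (M - 1) q i"
proof -
  define y where "y = - M + real i"
  define c where "c = pochhammer (- real n) i / (fact i * q ^ i)"
  have pascal: "pochhammer y (n - i) - (- real n + real i) * pochhammer (y + 1) (n - i - 1)
      = pochhammer (y + 1) (n - i)"
  proof (cases "n - i")
    case (Suc r)
    then have "real n - real i = real r + 1"
      using assms by linarith
    moreover have "pochhammer y (Suc r) = y * pochhammer (y + 1) r"
      by (simp add: pochhammer_rec)
    moreover have "pochhammer (y + 1) (Suc r) = pochhammer (y + 1) r * (y + 1 + real r)"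
      by (simp add: pochhammer_Suc)
    ultimately show ?thesis
      using Suc by (simp add: algebra_simps)
  qed (use assms in simp)
  have shifted: "- M + real (Suc i) = y + 1" "n - Suc i = n - i - 1" "- (M - 1) + real i = y + 1"
    unfolding y_def by simp_all
  have coeff_i: "kraw_coeff n M q i = c * pochhammer y (n - i)"
    unfolding kraw_coeff_def c_def y_def by simp
  have "q * of_nat (Suc i) * kraw_coeff n M q (Suc i)
      = q * of_nat (Suc i) * (pochhammer (- real n) i * (- real n + real i) * pochhammer (y + 1) (n - i - 1)
        / (fact (Suc i) * q ^ Suc i))"
    unfolding kraw_coeff_def shifted by (simp add: pochhammer_Suc)
  also have "\<dots> = c * ((- real n + real i) * pochhammer (y + 1) (n - i - 1))"
    using assms(1) unfolding c_def by (simp add: fact_Suc field_simps del: of_nat_Suc)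
  finally have coeff_Suc_i: "q * of_nat (Suc i) * kraw_coeff n M q (Suc i)
      = c * ((- real n + real i) * pochhammer (y + 1) (n - i - 1))" .
  have "kraw_coeff n M q i - q * of_nat (Suc i) * kraw_coeff n M q (Suc i)
      = c * (pochhammer y (n - i) - (- real n + real i) * pochhammer (y + 1) (n - i - 1))"
    unfolding coeff_i coeff_Suc_i by (simp add: algebra_simps)
  also have "\<dots> = kraw_coeff n (M - 1) q i"
    unfolding pascal kraw_coeff_def c_def shifted by simp
  finally show ?thesis .
qed

lemma sum_shift_vanishing_ends:
  assumes "f 0 = 0" "f (Suc n) = (0 :: 'a :: comm_monoid_add)"
  shows "(\<Sum>j=0..n. f j) = (\<Sum>i=0..n. f (Suc i))"
proof -
  have "(\<Sum>j=0..Suc n. f j) = f 0 + (\<Sum>i=0..n. f (Suc i))"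
    by (subst sum.atLeast0_atMost_Suc_shift) simp
  then show ?thesis
    using assms by simp
qed

lemma kraw_scaled_shift:
  assumes "q \<noteq> 0"
  shows "q * kraw_scaled n (z + 1) M q + (1 - q) * kraw_scaled n z M q = kraw_scaled n z (M - 1) q"
proof -
  define T where "T = (\<Sum>j=0..n. kraw_coeff n M q j * of_nat j * pochhammer (- z) (j - 1))"
  have "kraw_scaled n (z + 1) M q
      = (\<Sum>j=0..n. kraw_coeff n M q j * (pochhammer (- z) j - of_nat j * pochhammer (- z) (j - 1)))"
  proof -
    have "- (z + 1) = - z - 1"
      by simp
    then show ?thesis
      unfolding kraw_scaled_eq_sum_coeff using pochhammer_minus_one[of "- z"] by (intro sum.cong) auto
  qed
  then have shift: "kraw_scaled n (z + 1) M q = kraw_scaled n z M q - T"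
    unfolding kraw_scaled_eq_sum_coeff T_def by (simp add: algebra_simps sum_subtractf)
  have T_shifted: "T = (\<Sum>i=0..n. kraw_coeff n M q (Suc i) * of_nat (Suc i) * pochhammer (- z) i)"
    unfolding T_def by (subst sum_shift_vanishing_ends) (simp_all add: kraw_coeff_above_degree)
  have "q * kraw_scaled n (z + 1) M q + (1 - q) * kraw_scaled n z M q = kraw_scaled n z M q - q * T"
    unfolding shift by (simp add: algebra_simps)
  also have "\<dots> = (\<Sum>i=0..n. (kraw_coeff n M q i - q * of_nat (Suc i) * kraw_coeff n M q (Suc i))
      * pochhammer (- z) i)"
    unfolding T_shifted kraw_scaled_eq_sum_coeff
    by (simp add: algebra_simps sum_subtractf sum_distrib_left)
  also have "\<dots> = kraw_scaled n z (M - 1) q"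
    unfolding kraw_scaled_eq_sum_coeff using kraw_coeff_recurrence[OF assms]
    by (intro sum.cong) auto
  finally show ?thesis .
qed

lemma sum_binomial_Suc:
  "(\<Sum>y=0..Suc s. real (Suc s choose y) * h y)
     = (\<Sum>y=0..s. real (s choose y) * h (Suc y)) + (\<Sum>y=0..s. real (s choose y) * (h y :: real))"
proof -
  have "(\<Sum>y=0..Suc s. real (Suc s choose y) * h y)
      = h 0 + (\<Sum>y=0..s. real (Suc s choose Suc y) * h (Suc y))"
    by (subst sum.atLeast0_atMost_Suc_shift) simp
  moreover have "(\<Sum>y=0..s. real (Suc s choose Suc y) * h (Suc y))
      = (\<Sum>y=0..s. real (s choose y) * h (Suc y)) + (\<Sum>y=0..s. real (s choose Suc y) * h (Suc y))"
    by (simp add: algebra_simps sum.distrib)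
  moreover have "(\<Sum>y=0..Suc s. real (s choose y) * h y)
      = h 0 + (\<Sum>y=0..s. real (s choose Suc y) * h (Suc y))"
    by (subst sum.atLeast0_atMost_Suc_shift) simp
  moreover have "(\<Sum>y=0..Suc s. real (s choose y) * h y) = (\<Sum>y=0..s. real (s choose y) * h y)"
    by simp
  ultimately show ?thesis
    by simp
qed

text \<open>Averaging the argument of a Krawtchouk polynomial over a binomial distribution shifts its
  parameter: this is the one-urn case of the eigenvalue equation.\<close>

lemma kraw_scaled_binomial_mean:
  assumes "a \<noteq> 0" "a + b \<noteq> 0"
  shows "(\<Sum>y=0..s. real (s choose y) * a ^ y * b ^ (s - y) * kraw_scaled n (z + real y) M (a / (a + b)))
      = (a + b) ^ s * kraw_scaled n z (M - real s) (a / (a + b))"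
proof (induction s arbitrary: z M)
  case (Suc s)
  define q where "q = a / (a + b)"
  have q: "q \<noteq> 0" "(a + b) * q = a" "(a + b) * (1 - q) = b"
    unfolding q_def using assms by (simp_all add: field_simps)
  define K where "K z M = kraw_scaled n z M q" for z M
  define h where "h y = a ^ y * b ^ (Suc s - y) * K (z + real y) M" for y
  have "(\<Sum>y=0..Suc s. real (Suc s choose y) * a ^ y * b ^ (Suc s - y) * K (z + real y) M)
      = (\<Sum>y=0..Suc s. real (Suc s choose y) * h y)"
    unfolding h_def by (simp add: mult.assoc)
  also have "\<dots> = (\<Sum>y=0..s. real (s choose y) * h (Suc y)) + (\<Sum>y=0..s. real (s choose y) * h y)"
    by (rule sum_binomial_Suc)
  also have "(\<Sum>y=0..s. real (s choose y) * h (Suc y))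
      = a * (\<Sum>y=0..s. real (s choose y) * a ^ y * b ^ (s - y) * K ((z + 1) + real y) M)"
    unfolding h_def sum_distrib_left by (intro sum.cong) (simp_all add: algebra_simps)
  also have "(\<Sum>y=0..s. real (s choose y) * h y)
      = b * (\<Sum>y=0..s. real (s choose y) * a ^ y * b ^ (s - y) * K (z + real y) M)"
    unfolding h_def sum_distrib_left by (intro sum.cong) (simp_all add: algebra_simps Suc_diff_le)
  also have "a * (\<Sum>y=0..s. real (s choose y) * a ^ y * b ^ (s - y) * K ((z + 1) + real y) M)
      + b * (\<Sum>y=0..s. real (s choose y) * a ^ y * b ^ (s - y) * K (z + real y) M)
      = (a + b) ^ s * (a * K (z + 1) (M - real s) + b * K z (M - real s))"
    using Suc.IH[of "z + 1" M] Suc.IH[of z M] unfolding K_def q_def by (simp add: algebra_simps)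
  also have "a * K (z + 1) (M - real s) + b * K z (M - real s)
      = ((a + b) * q) * K (z + 1) (M - real s) + ((a + b) * (1 - q)) * K z (M - real s)"
    unfolding q(2,3) by simp
  also have "\<dots> = (a + b) * (q * K (z + 1) (M - real s) + (1 - q) * K z (M - real s))"
    by (simp add: algebra_simps)
  also have "\<dots> = (a + b) * K z (M - real (Suc s))"
    unfolding K_def using kraw_scaled_shift[OF q(1), of n z "M - real s"] by (simp add: algebra_simps)
  finally show ?case
    unfolding K_def q_def by simp
qed simp

lemma kraw_scaled_diagonal: "kraw_scaled n z z q = pochhammer (- z) n * (1 - 1 / q) ^ n"
proof -
  have "kraw_scaled n z z q
      = (\<Sum>i=0..n. pochhammer (- z) n * (pochhammer (- real n) i / fact i * (1 / q) ^ i))"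
    unfolding kraw_scaled_def
  proof (intro sum.cong refl)
    fix i assume "i \<in> {0..n}"
    then have "pochhammer (- z) n = pochhammer (- z) i * pochhammer (- z + real i) (n - i)"
      by (intro pochhammer_product) auto
    then show "pochhammer (- real n) i * pochhammer (- z) i * pochhammer (- z + real i) (n - i)
        / (fact i * q ^ i) = pochhammer (- z) n * (pochhammer (- real n) i / fact i * (1 / q) ^ i)"
      by (simp add: field_simps power_one_over)
  qed
  also have "\<dots> = pochhammer (- z) n * (\<Sum>i\<le>n. real (n choose i) * (- 1 / q) ^ i * 1 ^ (n - i))"
    unfolding sum_distrib_left[symmetric] atLeast0AtMost
  proof (intro arg_cong[where f = "\<lambda>t. _ * t"] sum.cong refl)
    fix i
    have "pochhammer (- real n) i / fact i = (-1) ^ i * (real n gchoose i)"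
      by (simp add: gbinomial_pochhammer)
    then show "pochhammer (- real n) i / fact i * (1 / q) ^ i = real (n choose i) * (- 1 / q) ^ i * 1 ^ (n - i)"
      by (simp add: binomial_gbinomial power_minus' power_mult_distrib[symmetric] field_simps)
  qed
  also have "\<dots> = pochhammer (- z) n * (1 - 1 / q) ^ n"
    using binomial_ring[of "- 1 / q" 1 n] by simp
  finally show ?thesis .
qed

lemma kraw_scaled_diagonal_eq_0: "j < n \<Longrightarrow> kraw_scaled n (real j) (real j) q = 0"
  by (simp add: kraw_scaled_diagonal pochhammer_of_nat_eq_0_iff)

lemma kraw_scaled_binomial_moment:
  assumes "a \<noteq> 0" "a + b \<noteq> 0"
  shows "(\<Sum>x=0..L. real (L choose x) * a ^ x * b ^ (L - x) * pochhammer (- real x) j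
            * kraw_scaled n (real x) (real L) (a / (a + b)))
    = (if j \<le> L then (-1) ^ j * falling (real L) j * a ^ j * (a + b) ^ (L - j)
         * kraw_scaled n (real j) (real j) (a / (a + b)) else 0)"
proof (cases "j \<le> L")
  case False
  then show ?thesis
    by (simp add: pochhammer_minus_falling falling_of_nat_eq_0)
next
  case True
  define q where "q = a / (a + b)"
  define g where "g x = real (L choose x) * a ^ x * b ^ (L - x) * pochhammer (- real x) j
      * kraw_scaled n (real x) (real L) q" for x
  have "(\<Sum>x=0..L. g x) = (\<Sum>x=j..L. g x)"
    using falling_of_nat_eq_0[of 0 j]
    by (intro sum.mono_neutral_right) (auto simp: g_def pochhammer_minus_falling falling_of_nat_eq_0)
  also have "\<dots> = (\<Sum>y=0..L-j. g (j + y))"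
    by (subst sum.atLeastAtMost_shift_0[OF True]) (simp add: comp_def)
  also have "\<dots> = (-1) ^ j * falling (real L) j * a ^ j * (\<Sum>y=0..L-j. real ((L - j) choose y)
      * a ^ y * b ^ ((L - j) - y) * kraw_scaled n (real j + real y) (real L) q)"
    unfolding sum_distrib_left
  proof (intro sum.cong refl)
    fix y assume y: "y \<in> {0..L-j}"
    have "g (j + y) = (-1) ^ j * (real (L choose (j + y)) * falling (real (j + y)) j) * a ^ (j + y)
        * b ^ (L - (j + y)) * kraw_scaled n (real j + real y) (real L) q"
      unfolding g_def pochhammer_minus_falling by (simp add: algebra_simps)
    also have "real (L choose (j + y)) * falling (real (j + y)) j = falling (real L) j * real ((L - j) choose y)"
      using binomial_mult_falling[of j "j + y" L] y True by simp
    finally have gy: "g (j + y) = (-1) ^ j * (falling (real L) j * real ((L - j) choose y)) * a ^ (j + y)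
        * b ^ (L - (j + y)) * kraw_scaled n (real j + real y) (real L) q" .
    have "L - (j + y) = L - j - y"
      by simp
    then show "g (j + y) = (-1) ^ j * falling (real L) j * a ^ j * (real ((L - j) choose y)
        * a ^ y * b ^ ((L - j) - y) * kraw_scaled n (real j + real y) (real L) q)"
      unfolding gy by (simp only: power_add) (simp add: mult_ac)
  qed
  also have "\<dots> = (-1) ^ j * falling (real L) j * a ^ j * ((a + b) ^ (L - j) * kraw_scaled n (real j) (real j) q)"
    using kraw_scaled_binomial_mean[OF assms, of "L - j" n "real j" "real L"] True
    unfolding q_def by (simp add: of_nat_diff)
  finally show ?thesis
    using True unfolding g_def q_def by simp
qed

lemma kraw_scaled_binomial_inner:
  assumes "a \<noteq> 0" "a + b \<noteq> 0"
  shows "(\<Sum>x=0..L. real (L choose x) * a ^ x * b ^ (L - x)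
            * kraw_scaled m (real x) (real L) (a / (a + b)) * kraw_scaled n (real x) (real L) (a / (a + b)))
    = (\<Sum>j=0..m. kraw_coeff m (real L) (a / (a + b)) j * (if j \<le> L then (-1) ^ j * falling (real L) j
         * a ^ j * (a + b) ^ (L - j) * kraw_scaled n (real j) (real j) (a / (a + b)) else 0))"
proof -
  define q where "q = a / (a + b)"
  have "(\<Sum>x=0..L. real (L choose x) * a ^ x * b ^ (L - x) * kraw_scaled m (real x) (real L) q
        * kraw_scaled n (real x) (real L) q)
      = (\<Sum>x=0..L. \<Sum>j=0..m. kraw_coeff m (real L) q j * (real (L choose x) * a ^ x * b ^ (L - x)
        * pochhammer (- real x) j * kraw_scaled n (real x) (real L) q))"
    unfolding kraw_scaled_eq_sum_coeff[of m] sum_distrib_left sum_distrib_right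
    by (intro sum.cong refl) (simp add: algebra_simps)
  also have "\<dots> = (\<Sum>j=0..m. kraw_coeff m (real L) q j * (\<Sum>x=0..L. real (L choose x) * a ^ x
        * b ^ (L - x) * pochhammer (- real x) j * kraw_scaled n (real x) (real L) q))"
    unfolding sum_distrib_left by (rule sum.swap)
  finally show ?thesis
    unfolding q_def kraw_scaled_binomial_moment[OF assms] .
qed

lemma kraw_scaled_norm:
  assumes "a \<noteq> 0" "a + b \<noteq> 0"
  shows "(\<Sum>x=0..L. real (L choose x) * a ^ x * b ^ (L - x)
            * kraw_scaled n (real x) (real L) (a / (a + b)) * kraw_scaled n (real x) (real L) (a / (a + b)))
    = fact n * falling (real L) n * (b / a) ^ n * (a + b) ^ L"
proof (cases "n \<le> L")
  case False
  then show ?thesis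
    unfolding kraw_scaled_binomial_inner[OF assms]
    by (auto intro!: sum.neutral simp: kraw_scaled_diagonal_eq_0 falling_of_nat_eq_0)
next
  case True
  define q where "q = a / (a + b)"
  have q: "1 - 1 / q = - (b / a)" "1 / q = (a + b) / a"
    unfolding q_def using assms by (simp_all add: field_simps)
  have "(\<Sum>j=0..n. kraw_coeff n (real L) q j * (if j \<le> L then (-1) ^ j * falling (real L) j
         * a ^ j * (a + b) ^ (L - j) * kraw_scaled n (real j) (real j) q else 0))
      = kraw_coeff n (real L) q n * ((-1) ^ n * falling (real L) n * a ^ n * (a + b) ^ (L - n)
         * kraw_scaled n (real n) (real n) q)"
    using True by (subst sum.mono_neutral_left[where T = "{0..n}" and S = "{n}", symmetric])
      (auto simp: kraw_scaled_diagonal_eq_0)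
  also have "\<dots> = fact n * falling (real L) n * (b / a) ^ n * (a + b) ^ L"
  proof -
    define u :: real where "u = (-1) ^ n"
    have uu: "u * u = 1"
      unfolding u_def by (simp add: power_mult_distrib[symmetric])
    have lead: "kraw_coeff n (real L) q n = u * ((a + b) / a) ^ n"
      unfolding kraw_coeff_degree u_def q(2)[symmetric] by (simp add: power_one_over)
    have diag: "kraw_scaled n (real n) (real n) q = u * fact n * (u * (b / a) ^ n)"
      unfolding kraw_scaled_diagonal q(1) pochhammer_same u_def power_minus[of "b / a"] by (simp only: mult_ac)
    have pow: "((a + b) / a) ^ n * a ^ n = (a + b) ^ n"
      using assms by (simp add: power_divide)
    have split: "(a + b) ^ L = (a + b) ^ n * (a + b) ^ (L - n)"
      using True by (simp add: power_add[symmetric])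
    have "kraw_coeff n (real L) q n * ((-1) ^ n * falling (real L) n * a ^ n * (a + b) ^ (L - n)
         * kraw_scaled n (real n) (real n) q)
      = (u * u) * (u * u) * (((a + b) / a) ^ n * a ^ n) * fact n * falling (real L) n * (b / a) ^ n
         * (a + b) ^ (L - n)"
      unfolding lead diag u_def[symmetric] by (simp only: mult_ac)
    then show ?thesis
      unfolding uu pow split by (simp only: mult_ac mult_1_left)
  qed
  finally show ?thesis
    unfolding kraw_scaled_binomial_inner[OF assms] q_def .
qed

lemma kraw_scaled_orthogonal:
  assumes "a \<noteq> 0" "a + b \<noteq> 0"
  shows "(\<Sum>x=0..L. real (L choose x) * a ^ x * b ^ (L - x)
            * kraw_scaled m (real x) (real L) (a / (a + b)) * kraw_scaled n (real x) (real L) (a / (a + b)))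
    = (if m = n then fact n * falling (real L) n * (b / a) ^ n * (a + b) ^ L else 0)"
proof -
  have "(\<Sum>x=0..L. real (L choose x) * a ^ x * b ^ (L - x)
            * kraw_scaled m (real x) (real L) (a / (a + b)) * kraw_scaled n (real x) (real L) (a / (a + b))) = 0"
    if "m < n" for m n
    unfolding kraw_scaled_binomial_inner[OF assms] using that
    by (intro sum.neutral) (auto simp: kraw_scaled_diagonal_eq_0)
  from this[of m n] this[of n m] show ?thesis
    using kraw_scaled_norm[OF assms] by (cases m n rule: linorder_cases) (simp_all add: mult_ac)
qed

section \<open>Compositions of \<open>N\<close> into \<open>d\<close> parts\<close>

lemma sum_atLeast1_Suc: "(\<Sum>i=1..Suc d. f i) = f 1 + (\<Sum>i=1..d. f (Suc i))"
proof -
  have "(\<Sum>i=1..Suc d. f i) = f 1 + (\<Sum>i=Suc 1..Suc d. f i)"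
    by (subst sum.atLeast_Suc_atMost) auto
  then show ?thesis
    by (simp only: sum.shift_bounds_cl_Suc_ivl)
qed

lemma prod_atLeast1_Suc: "(\<Prod>i=1..Suc d. f i) = f 1 * (\<Prod>i=1..d. f (Suc i))"
proof -
  have "(\<Prod>i=1..Suc d. f i) = f 1 * (\<Prod>i=Suc 1..Suc d. f i)"
    by (subst prod.atLeast_Suc_atMost) auto
  then show ?thesis
    by (simp only: prod.shift_bounds_cl_Suc_ivl)
qed

definition vcons :: "nat \<Rightarrow> (nat \<Rightarrow> nat) \<Rightarrow> nat \<Rightarrow> nat" where
  "vcons a v = (\<lambda>i. if i = 0 then 0 else if i = 1 then a else v (i - 1))"

definition vtail :: "(nat \<Rightarrow> 'a :: zero) \<Rightarrow> nat \<Rightarrow> 'a" where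
  "vtail x = (\<lambda>i. if i = 0 then 0 else x (Suc i))"

definition ptail :: "(nat \<Rightarrow> real) \<Rightarrow> nat \<Rightarrow> real" where
  "ptail p = (\<lambda>i. p (Suc i))"

lemma vcons_simps [simp]:
  "vcons a v 0 = 0" "vcons a v (Suc 0) = a" "vcons a v (Suc (Suc i)) = v (Suc i)"
  unfolding vcons_def by auto

lemma vtail_simps [simp]: "vtail x 0 = 0" "vtail x (Suc i) = x (Suc (Suc i))"
  unfolding vtail_def by auto

lemma vtail_vcons: "v 0 = 0 \<Longrightarrow> vtail (vcons a v) = v"
  unfolding vtail_def vcons_def by auto

lemma vcons_vtail: "x 0 = 0 \<Longrightarrow> vcons (x 1) (vtail x) = x"
  unfolding vtail_def vcons_def by (auto simp: fun_eq_iff)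

lemma vtail_add_vcons: "v 0 = 0 \<Longrightarrow> vtail (\<lambda>i. z i + vcons a v i) = (\<lambda>i. vtail z i + v i)"
  unfolding vtail_def vcons_def by auto

lemma sum_vcons: "(\<Sum>i=1..Suc d. vcons a v i) = a + (\<Sum>i=1..d. v i)"
  unfolding sum_atLeast1_Suc by (simp add: vcons_def)

lemma sum_ptail: "(\<Sum>i=1..Suc e. p i) = p 1 + (\<Sum>i=1..e. ptail p i)"
  unfolding sum_atLeast1_Suc ptail_def ..

lemma states_zero_at_0: "x \<in> states d N \<Longrightarrow> x 0 = 0"
  unfolding states_def by auto

lemma sum_states: "x \<in> states d N \<Longrightarrow> (\<Sum>i=1..d. x i) = N"
  unfolding states_def by auto

lemma vcons_in_states_iff:
  assumes "v 0 = 0"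
  shows "vcons a v \<in> states (Suc d) N \<longleftrightarrow> a \<le> N \<and> v \<in> states d (N - a)"
proof -
  have "(\<forall>i. i \<notin> {1..Suc d} \<longrightarrow> vcons a v i = 0) \<longleftrightarrow> (\<forall>i. i \<notin> {1..d} \<longrightarrow> v i = 0)"
  proof (intro iffI allI impI)
    fix i assume H: "\<forall>i. i \<notin> {1..Suc d} \<longrightarrow> vcons a v i = 0" "i \<notin> {1..d}"
    show "v i = 0"
    proof (cases i)
      case (Suc j)
      then have "Suc i \<notin> {1..Suc d}"
        using H(2) by auto
      then show ?thesis
        using H(1) Suc by fastforce
    qed (use assms in simp)
  next
    fix i assume H: "\<forall>i. i \<notin> {1..d} \<longrightarrow> v i = 0" "i \<notin> {1..Suc d}"
    then have "i = 0 \<or> (i \<ge> 2 \<and> i - 1 \<notin> {1..d})"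
      by auto
    then show "vcons a v i = 0"
      using H(1) by (auto simp: vcons_def)
  qed
  then show ?thesis
    unfolding states_def mem_Collect_eq sum_vcons by auto
qed

lemma vtail_in_states: "x \<in> states (Suc d) N \<Longrightarrow> x 1 \<le> N \<and> vtail x \<in> states d (N - x 1)"
  using vcons_in_states_iff[of "vtail x" "x 1" d N] vcons_vtail[of x] states_zero_at_0[of x]
  by simp

lemma states_Suc: "states (Suc d) N = (\<lambda>(a, v). vcons a v) ` (SIGMA a:{0..N}. states d (N - a))"
proof (rule Set.set_eqI, rule iffI)
  fix x assume x: "x \<in> states (Suc d) N"
  then have "x = vcons (x 1) (vtail x)"
    using vcons_vtail states_zero_at_0 by metis
  then show "x \<in> (\<lambda>(a, v). vcons a v) ` (SIGMA a:{0..N}. states d (N - a))"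
    using vtail_in_states[OF x] by (intro image_eqI[of _ _ "(x 1, vtail x)"]) auto
next
  fix x assume "x \<in> (\<lambda>(a, v). vcons a v) ` (SIGMA a:{0..N}. states d (N - a))"
  then obtain a v where "x = vcons a v" "a \<le> N" "v \<in> states d (N - a)"
    by auto
  then show "x \<in> states (Suc d) N"
    using vcons_in_states_iff[of v a d N] states_zero_at_0[of v d "N - a"] by simp
qed

lemma states_0: "states 0 N = (if N = 0 then {\<lambda>_. 0} else {})"
  unfolding states_def by auto

lemma states_1: "states (Suc 0) N = {vcons N (\<lambda>_. 0)}"
proof -
  have "(SIGMA a:{0..N}. states 0 (N - a)) = {(N, \<lambda>_. 0)}"
    by (auto simp: states_0 split: if_splits)
  then show ?thesis
    unfolding states_Suc by simp
qed

lemma states_of_0: "states d 0 = {\<lambda>_. 0}"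
  unfolding states_def by (auto simp: fun_eq_iff) (metis atLeastAtMost_iff)

lemma finite_states: "finite (states d N)"
  by (induction d arbitrary: N) (simp_all add: states_0 states_Suc)

lemma inj_on_vcons: "inj_on (\<lambda>(a, v). vcons a v) (SIGMA a:A. states d (N a))"
proof (rule inj_onI, clarify)
  fix a v b w assume "v \<in> states d (N a)" "w \<in> states d (N b)" and eq: "vcons a v = vcons b w"
  then have "v 0 = 0" "w 0 = 0"
    by (auto dest: states_zero_at_0)
  then show "a = b \<and> v = w"
    using eq vtail_vcons by (metis vcons_simps(2))
qed

lemma sum_states_Suc:
  "(\<Sum>x\<in>states (Suc d) N. f x) = (\<Sum>a=0..N. \<Sum>v\<in>states d (N - a). f (vcons a v))"
  unfolding states_Suc
  by (subst sum.reindex[OF inj_on_vcons]) (simp add: sum.Sigma finite_states split_def)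

lemma card_states: "card (states d n) = (d + n - 1) choose n"
proof (induction d arbitrary: n)
  case 0
  then show ?case
    by (simp add: states_0)
next
  case (Suc d)
  have "card (states (Suc d) n) = card (SIGMA a:{0..n}. states d (n - a))"
    unfolding states_Suc by (rule card_image[OF inj_on_vcons])
  also have "\<dots> = (\<Sum>a=0..n. (d + (n - a) - 1) choose (n - a))"
    by (simp add: finite_states Suc.IH)
  also have "\<dots> = (\<Sum>k=0..n. (d + k - 1) choose k)"
    by (subst sum.atLeastAtMost_rev) simp
  also have "\<dots> = (Suc d + n - 1) choose n"
  proof (cases d)
    case 0
    then show ?thesis
      by (simp add: sum.atLeast_Suc_atMost)
  next
    case (Suc d')
    then show ?thesis
      using sum_choose_lower[of d' n] by (simp add: atLeast0AtMost)
  qed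
  finally show ?case .
qed

definition states_upto :: "nat \<Rightarrow> nat \<Rightarrow> (nat \<Rightarrow> nat) set" where
  "states_upto e N = (\<Union>n\<in>{0..N}. states e n)"

lemma states_disjoint: "n \<noteq> n' \<Longrightarrow> states e n \<inter> states e n' = {}"
  unfolding states_def by auto

lemma finite_states_upto: "finite (states_upto e N)"
  unfolding states_upto_def by (simp add: finite_states)

lemma zero_in_states_upto: "(\<lambda>_. 0) \<in> states_upto e N"
  unfolding states_upto_def by (rule UN_I[of 0]) (auto simp: states_of_0)

lemma card_states_upto: "card (states_upto e N) = card (states (Suc e) N)"
proof -
  have "card (states_upto e N) = (\<Sum>n=0..N. (e + n - 1) choose n)"
    unfolding states_upto_def
    by (subst card_UN_disjoint) (auto simp: finite_states states_disjoint card_states)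
  also have "\<dots> = (e + N) choose N"
  proof (cases e)
    case 0
    then show ?thesis
      by (simp add: sum.atLeast_Suc_atMost)
  next
    case (Suc e')
    then show ?thesis
      using sum_choose_lower[of e' N] by (simp add: atLeast0AtMost)
  qed
  finally show ?thesis
    by (simp add: card_states)
qed

lemma states_upto_minus_zero: "states_upto e N - {\<lambda>_. 0} = (\<Union>n\<in>{1..N}. states e n)"
proof (rule Set.set_eqI, rule iffI)
  fix nn assume "nn \<in> states_upto e N - {\<lambda>_. 0}"
  then obtain n where "n \<le> N" "nn \<in> states e n" "nn \<noteq> (\<lambda>_. 0)"
    unfolding states_upto_def by auto
  moreover have "n \<noteq> 0"
    using calculation states_of_0[of e] by (metis singletonD)
  ultimately show "nn \<in> (\<Union>n\<in>{1..N}. states e n)"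
    by auto
next
  fix nn assume "nn \<in> (\<Union>n\<in>{1..N}. states e n)"
  then obtain n where n: "1 \<le> n" "n \<le> N" "nn \<in> states e n"
    by auto
  then have "nn \<noteq> (\<lambda>_. 0)"
    unfolding states_def by auto
  then show "nn \<in> states_upto e N - {\<lambda>_. 0}"
    using n unfolding states_upto_def by auto
qed

lemma diff_in_states:
  assumes "x \<in> states d N" "k \<in> states d s" "\<forall>i. k i \<le> x i"
  shows "(\<lambda>i. x i - k i) \<in> states d (N - s)"
proof -
  have "(\<Sum>i=1..d. x i - k i) = (\<Sum>i=1..d. x i) - (\<Sum>i=1..d. k i)"
    using assms(3) by (intro sum_subtractf_nat) auto
  then show ?thesis
    using assms unfolding states_def by auto
qed

lemma add_in_states: "z \<in> states d t \<Longrightarrow> m \<in> states d s \<Longrightarrow> (\<lambda>i. z i + m i) \<in> states d (t + s)"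
  unfolding states_def by (auto simp: sum.distrib)

section \<open>Product polynomials and their inner products\<close>

text \<open>The product in \<open>mkraw\<close> with the ball count \<open>N\<close> freed to a real parameter \<open>L\<close>, so that
  the number of balls can change along the recursion over the urns; \<open>mkraw (Suc e) N\<close> is this product
  at \<open>L = N\<close> times \<open>mkraw_factor e N\<close>.\<close>

definition kraw_prod :: "nat \<Rightarrow> real \<Rightarrow> (nat \<Rightarrow> real) \<Rightarrow> (nat \<Rightarrow> nat) \<Rightarrow> (nat \<Rightarrow> nat) \<Rightarrow> real" where
  "kraw_prod d L p nn x = (\<Prod>j=1..d-1. kraw_scaled (nn j) (real (x j))
     (L - real (\<Sum>i\<in>{1..<j}. x i) - real (\<Sum>i\<in>{j+1..d-1}. nn i)) (p j / (\<Sum>i=j..d. p i)))"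

definition mkraw_factor :: "nat \<Rightarrow> nat \<Rightarrow> (nat \<Rightarrow> nat) \<Rightarrow> real" where
  "mkraw_factor e N nn = (-1) ^ (\<Sum>i=1..e. nn i) / falling (real N) (\<Sum>i=1..e. nn i)"

lemma mkraw_eq_kraw_prod: "mkraw (Suc e) N p nn x = mkraw_factor e N nn * kraw_prod (Suc e) (real N) p nn x"
  unfolding mkraw_def kraw_prod_def mkraw_factor_def by simp

lemma mkraw_factor_nonzero: "nn \<in> states_upto e N \<Longrightarrow> mkraw_factor e N nn \<noteq> 0"
  unfolding states_upto_def mkraw_factor_def
  by (auto dest!: sum_states simp: falling_of_nat_pos less_imp_neq[symmetric])

lemma kraw_prod_1: "kraw_prod (Suc 0) L p nn x = 1"
  unfolding kraw_prod_def by simp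

lemma kraw_prod_zero: "kraw_prod d L p (\<lambda>_. 0) x = 1"
  unfolding kraw_prod_def kraw_scaled_def by simp

lemma sum_vtail_shift: "1 \<le> a \<Longrightarrow> (\<Sum>i=Suc a..Suc b. x i) = (\<Sum>i=a..b. vtail x i)"
  by (subst sum.shift_bounds_cl_Suc_ivl) (auto intro!: sum.cong simp: vtail_def)

lemma kraw_prod_Suc:
  "kraw_prod (Suc (Suc e)) L p nn x =
     kraw_scaled (nn 1) (real (x 1)) (L - real (\<Sum>i=1..e. vtail nn i)) (p 1 / (\<Sum>i=1..Suc (Suc e). p i))
     * kraw_prod (Suc e) (L - real (x 1)) (ptail p) (vtail nn) (vtail x)"
proof -
  have "kraw_prod (Suc (Suc e)) L p nn x = (\<Prod>j=1..Suc e. kraw_scaled (nn j) (real (x j))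
     (L - real (\<Sum>i\<in>{1..<j}. x i) - real (\<Sum>i\<in>{j+1..Suc e}. nn i)) (p j / (\<Sum>i=j..Suc (Suc e). p i)))"
    unfolding kraw_prod_def by simp
  also have "\<dots> = kraw_scaled (nn 1) (real (x 1)) (L - real (\<Sum>i=1..e. vtail nn i)) (p 1 / (\<Sum>i=1..Suc (Suc e). p i))
    * (\<Prod>j=1..e. kraw_scaled (nn (Suc j)) (real (x (Suc j)))
     (L - real (\<Sum>i\<in>{1..<Suc j}. x i) - real (\<Sum>i\<in>{Suc j+1..Suc e}. nn i)) (p (Suc j) / (\<Sum>i=Suc j..Suc (Suc e). p i)))"
    unfolding prod_atLeast1_Suc using sum_vtail_shift[of 1 nn e] by simp
  also have "(\<Prod>j=1..e. kraw_scaled (nn (Suc j)) (real (x (Suc j)))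
     (L - real (\<Sum>i\<in>{1..<Suc j}. x i) - real (\<Sum>i\<in>{Suc j+1..Suc e}. nn i)) (p (Suc j) / (\<Sum>i=Suc j..Suc (Suc e). p i)))
     = kraw_prod (Suc e) (L - real (x 1)) (ptail p) (vtail nn) (vtail x)"
    unfolding kraw_prod_def
  proof (rule prod.cong)
    fix j assume j: "j \<in> {1..Suc e - 1}"
    have "(\<Sum>i\<in>{1..<Suc j}. x i) = x 1 + (\<Sum>i\<in>{Suc 1..<Suc j}. x i)"
      using j by (subst sum.atLeast_Suc_lessThan) auto
    also have "(\<Sum>i\<in>{Suc 1..<Suc j}. x i) = (\<Sum>i\<in>{1..<j}. vtail x i)"
      by (subst sum.atLeast_Suc_lessThan_Suc_shift) (auto intro!: sum.cong simp: vtail_def)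
    finally have "(\<Sum>i\<in>{1..<Suc j}. x i) = x 1 + (\<Sum>i\<in>{1..<j}. vtail x i)" .
    moreover have "(\<Sum>i\<in>{Suc j+1..Suc e}. nn i) = (\<Sum>i\<in>{j+1..Suc e - 1}. vtail nn i)"
      using sum_vtail_shift[of "j+1" nn e] by simp
    moreover have "(\<Sum>i=Suc j..Suc (Suc e). p i) = (\<Sum>i=j..Suc e. ptail p i)"
      unfolding ptail_def by (rule sum.shift_bounds_cl_Suc_ivl)
    ultimately show "kraw_scaled (nn (Suc j)) (real (x (Suc j)))
        (L - real (\<Sum>i\<in>{1..<Suc j}. x i) - real (\<Sum>i\<in>{Suc j+1..Suc e}. nn i))
        (p (Suc j) / (\<Sum>i=Suc j..Suc (Suc e). p i))
      = kraw_scaled (vtail nn j) (real (vtail x j))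
          (L - real (x 1) - real (\<Sum>i\<in>{1..<j}. vtail x i) - real (\<Sum>i\<in>{j+1..Suc e - 1}. vtail nn i))
          (ptail p j / (\<Sum>i=j..Suc e. ptail p i))"
      using j by (simp add: vtail_def ptail_def diff_diff_eq)
  qed simp
  finally show ?thesis .
qed

lemma multinom_vcons:
  assumes "a \<le> N"
  shows "multinom (Suc d) N p (vcons a v) = real (N choose a) * p 1 ^ a * multinom d (N - a) (ptail p) v"
proof -
  have "(\<Prod>i=1..Suc d. fact (vcons a v i) :: real) = fact a * (\<Prod>i=1..d. fact (v i))"
    unfolding prod_atLeast1_Suc by (auto intro!: prod.cong arg_cong[where f = "\<lambda>t. _ * t"] simp: vcons_def)
  moreover have "(\<Prod>i=1..Suc d. p i ^ vcons a v i) = p 1 ^ a * (\<Prod>i=1..d. ptail p i ^ v i)"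
    unfolding prod_atLeast1_Suc
    by (auto intro!: prod.cong arg_cong[where f = "\<lambda>t. _ * t"] simp: vcons_def ptail_def)
  moreover have "real (N choose a) = fact N / (fact a * fact (N - a))"
    using assms by (rule binomial_fact)
  ultimately show ?thesis
    unfolding multinom_def by (simp add: field_simps)
qed

lemma multinom_1: "multinom (Suc 0) N p (vcons N (\<lambda>_. 0)) = p 1 ^ N"
  using multinom_vcons[of N N 0 p "\<lambda>_. 0"] by (simp add: multinom_def)

lemma multinom_kraw_prod_vcons:
  assumes "a \<le> s" "v \<in> states (Suc e) (s - a)"
  shows "multinom (Suc (Suc e)) s p (vcons a v) * kraw_prod (Suc (Suc e)) L p nn (\<lambda>i. z i + vcons a v i)
    = real (s choose a) * p 1 ^ a
      * kraw_scaled (nn 1) (real (z 1) + real a) (L - real (\<Sum>i=1..e. vtail nn i)) (p 1 / (\<Sum>i=1..Suc (Suc e). p i))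
      * (multinom (Suc e) (s - a) (ptail p) v
        * kraw_prod (Suc e) (L - real (z 1 + a)) (ptail p) (vtail nn) (\<lambda>i. vtail z i + v i))"
  using states_zero_at_0[OF assms(2)] unfolding multinom_vcons[OF assms(1)] kraw_prod_Suc
  by (simp add: vtail_add_vcons mult_ac)

lemma kraw_prod_multinomial_mean:
  assumes "\<forall>i\<in>{1..Suc e}. p i > 0"
  shows "(\<Sum>m\<in>states (Suc e) s. multinom (Suc e) s p m * kraw_prod (Suc e) L p nn (\<lambda>i. z i + m i))
       = (\<Sum>i=1..Suc e. p i) ^ s * kraw_prod (Suc e) (L - real s) p nn z"
  using assms
proof (induction e arbitrary: p L nn z s)
  case 0
  then show ?case
    by (simp add: states_1 multinom_1 kraw_prod_1)
next
  case (Suc e)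
  define S' where "S' = (\<Sum>i=1..Suc e. ptail p i)"
  define M where "M = L - real (\<Sum>i=1..e. vtail nn i)"
  define q where "q = p 1 / (\<Sum>i=1..Suc (Suc e). p i)"
  define K where "K a = kraw_scaled (nn 1) (real (z 1) + real a) M q" for a
  have S: "(\<Sum>i=1..Suc (Suc e). p i) = p 1 + S'"
    unfolding S'_def by (rule sum_ptail)
  have tail_pos: "\<forall>i\<in>{1..Suc e}. ptail p i > 0"
    using Suc.prems by (auto simp: ptail_def)
  have p1: "p 1 > 0" "S' > 0"
    using Suc.prems unfolding S'_def by (simp, intro sum_pos) (use tail_pos in auto)
  have "(\<Sum>m\<in>states (Suc (Suc e)) s. multinom (Suc (Suc e)) s p m * kraw_prod (Suc (Suc e)) L p nn (\<lambda>i. z i + m i))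
     = (\<Sum>a=0..s. \<Sum>v\<in>states (Suc e) (s - a). multinom (Suc (Suc e)) s p (vcons a v)
          * kraw_prod (Suc (Suc e)) L p nn (\<lambda>i. z i + vcons a v i))"
    by (rule sum_states_Suc)
  also have "\<dots> = (\<Sum>a=0..s. real (s choose a) * p 1 ^ a * K a *
        (\<Sum>v\<in>states (Suc e) (s - a). multinom (Suc e) (s - a) (ptail p) v
          * kraw_prod (Suc e) (L - real (z 1 + a)) (ptail p) (vtail nn) (\<lambda>i. vtail z i + v i)))"
    unfolding K_def M_def q_def sum_distrib_left by (intro sum.cong refl) (simp add: multinom_kraw_prod_vcons)
  also have "\<dots> = (\<Sum>a=0..s. real (s choose a) * p 1 ^ a * S' ^ (s - a) * K a)
      * kraw_prod (Suc e) (L - real s - real (z 1)) (ptail p) (vtail nn) (vtail z)"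
    unfolding sum_distrib_right
  proof (intro sum.cong refl)
    fix a assume "a \<in> {0..s}"
    then have "L - real (z 1 + a) - real (s - a) = L - real s - real (z 1)"
      by (simp add: of_nat_diff)
    then show "real (s choose a) * p 1 ^ a * K a *
        (\<Sum>v\<in>states (Suc e) (s - a). multinom (Suc e) (s - a) (ptail p) v
          * kraw_prod (Suc e) (L - real (z 1 + a)) (ptail p) (vtail nn) (\<lambda>i. vtail z i + v i))
      = real (s choose a) * p 1 ^ a * S' ^ (s - a) * K a
        * kraw_prod (Suc e) (L - real s - real (z 1)) (ptail p) (vtail nn) (vtail z)"
      unfolding Suc.IH[OF tail_pos] S'_def by (simp only: mult_ac)
  qed
  also have "(\<Sum>a=0..s. real (s choose a) * p 1 ^ a * S' ^ (s - a) * K a)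
      = (p 1 + S') ^ s * kraw_scaled (nn 1) (real (z 1)) (M - real s) q"
    unfolding K_def q_def S using kraw_scaled_binomial_mean[of "p 1" S' s "nn 1" "real (z 1)" M] p1
    by simp
  finally show ?case
    unfolding kraw_prod_Suc[of e "L - real s"] S M_def q_def by (simp add: algebra_simps)
qed

lemma sum_multinom:
  assumes "\<forall>i\<in>{1..Suc e}. p i > 0"
  shows "(\<Sum>m\<in>states (Suc e) s. multinom (Suc e) s p m) = (\<Sum>i=1..Suc e. p i) ^ s"
  using kraw_prod_multinomial_mean[OF assms, of s 0 "\<lambda>_. 0" "\<lambda>_. 0"] by (simp add: kraw_prod_zero)

definition kraw_inner :: "nat \<Rightarrow> nat \<Rightarrow> (nat \<Rightarrow> real) \<Rightarrow> (nat \<Rightarrow> nat) \<Rightarrow> (nat \<Rightarrow> nat) \<Rightarrow> real" where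
  "kraw_inner d L p nn mm =
     (\<Sum>x\<in>states d L. multinom d L p x * kraw_prod d (real L) p nn x * kraw_prod d (real L) p mm x)"

lemma kraw_inner_commute: "kraw_inner d L p nn mm = kraw_inner d L p mm nn"
  unfolding kraw_inner_def by (simp add: mult_ac)

lemma kraw_inner_Suc:
  "kraw_inner (Suc (Suc e)) L p nn mm = (\<Sum>a=0..L. real (L choose a) * p 1 ^ a *
     kraw_scaled (nn 1) (real a) (real L - real (\<Sum>i=1..e. vtail nn i)) (p 1 / (\<Sum>i=1..Suc (Suc e). p i)) *
     kraw_scaled (mm 1) (real a) (real L - real (\<Sum>i=1..e. vtail mm i)) (p 1 / (\<Sum>i=1..Suc (Suc e). p i)) *
     kraw_inner (Suc e) (L - a) (ptail p) (vtail nn) (vtail mm))"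
  unfolding kraw_inner_def sum_states_Suc[where d = "Suc e" and N = L] sum_distrib_left
proof (intro sum.cong refl)
  fix a v assume "a \<in> {0..L}" "v \<in> states (Suc e) (L - a)"
  then have "a \<le> L" "v 0 = 0"
    by (auto dest: states_zero_at_0)
  then show "multinom (Suc (Suc e)) L p (vcons a v) * kraw_prod (Suc (Suc e)) (real L) p nn (vcons a v)
      * kraw_prod (Suc (Suc e)) (real L) p mm (vcons a v)
    = real (L choose a) * p 1 ^ a *
      kraw_scaled (nn 1) (real a) (real L - real (\<Sum>i=1..e. vtail nn i)) (p 1 / (\<Sum>i=1..Suc (Suc e). p i)) *
      kraw_scaled (mm 1) (real a) (real L - real (\<Sum>i=1..e. vtail mm i)) (p 1 / (\<Sum>i=1..Suc (Suc e). p i)) *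
      (multinom (Suc e) (L - a) (ptail p) v * kraw_prod (Suc e) (real (L - a)) (ptail p) (vtail nn) v
        * kraw_prod (Suc e) (real (L - a)) (ptail p) (vtail mm) v)"
    unfolding kraw_prod_Suc by (simp add: multinom_vcons vtail_vcons mult_ac of_nat_diff)
qed

section \<open>One step of the Ehrenfest chain\<close>

lemma binomial_falling_kraw_inner:
  assumes "u > 0" "v > 0"
  shows "(\<Sum>a=0..L. real (L choose a) * falling (real (L - a)) m * v ^ (L - a) * u ^ a
            * kraw_scaled k (real a) (real L - real m) (u / (u + v))
            * kraw_scaled k' (real a) (real L - real m) (u / (u + v)))
    = (if k = k' then fact k * (v / u) ^ k * v ^ m * falling (real L) (m + k) * (u + v) ^ (L - m) else 0)"
proof (cases "m \<le> L")
  case False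
  then have "falling (real (L - a)) m = 0" "falling (real L) (m + k) = 0" for a
    by (simp_all add: falling_of_nat_eq_0)
  then show ?thesis
    by (cases "k = k'") (simp_all del: of_nat_diff)
next
  case True
  define K where "K a = kraw_scaled k (real a) (real (L - m)) (u / (u + v))
      * kraw_scaled k' (real a) (real (L - m)) (u / (u + v))" for a
  have "(\<Sum>a=0..L. real (L choose a) * falling (real (L - a)) m * v ^ (L - a) * u ^ a
            * kraw_scaled k (real a) (real L - real m) (u / (u + v))
            * kraw_scaled k' (real a) (real L - real m) (u / (u + v)))
      = (\<Sum>a=0..L. falling (real L) m * real ((L - m) choose a) * v ^ (L - a) * u ^ a * K a)"
  proof (intro sum.cong refl)
    fix a assume "a \<in> {0..L}"
    then have binom: "real (L choose a) * falling (real (L - a)) m = falling (real L) m * real ((L - m) choose a)"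
      by (intro binomial_mult_falling_diff) simp
    have diff: "real L - real m = real (L - m)"
      using True by simp
    show "real (L choose a) * falling (real (L - a)) m * v ^ (L - a) * u ^ a
        * kraw_scaled k (real a) (real L - real m) (u / (u + v))
        * kraw_scaled k' (real a) (real L - real m) (u / (u + v))
      = falling (real L) m * real ((L - m) choose a) * v ^ (L - a) * u ^ a * K a"
      unfolding K_def by (simp only: mult.assoc[symmetric] binom diff)
  qed
  also have "\<dots> = (\<Sum>a=0..L-m. falling (real L) m * real ((L - m) choose a) * v ^ (L - a) * u ^ a * K a)"
    by (rule sum.mono_neutral_right) auto
  also have "\<dots> = falling (real L) m * v ^ m
      * (\<Sum>a=0..L-m. real ((L - m) choose a) * u ^ a * v ^ (L - m - a) * K a)"
    unfolding sum_distrib_left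
  proof (intro sum.cong refl)
    fix a assume "a \<in> {0..L-m}"
    then have "v ^ (L - a) = v ^ m * v ^ (L - m - a)"
      using True by (simp add: power_add[symmetric])
    then show "falling (real L) m * real ((L - m) choose a) * v ^ (L - a) * u ^ a * K a
        = falling (real L) m * v ^ m * (real ((L - m) choose a) * u ^ a * v ^ (L - m - a) * K a)"
      by (simp only: mult_ac)
  qed
  also have "\<dots> = falling (real L) m * v ^ m
      * (if k = k' then fact k * falling (real (L - m)) k * (v / u) ^ k * (u + v) ^ (L - m) else 0)"
    using kraw_scaled_orthogonal[of u v "L - m" k k'] assms unfolding K_def by (simp add: mult.assoc)
  also have "\<dots> = (if k = k' then fact k * (v / u) ^ k * v ^ m * falling (real L) (m + k) * (u + v) ^ (L - m) else 0)"
    using falling_add[of "real L" m k] True by (cases "k = k'") (simp_all add: of_nat_diff mult_ac)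
  finally show ?thesis .
qed

lemma kraw_inner_orthogonal:
  assumes "\<forall>i\<in>{1..Suc e}. p i > 0" "nn \<in> states e n" "mm \<in> states e n'"
  shows "\<exists>c>0. \<forall>L. kraw_inner (Suc e) L p nn mm
      = (if nn = mm then c * falling (real L) n * (\<Sum>i=1..Suc e. p i) ^ L else 0)"
  using assms
proof (induction e arbitrary: p nn mm n n')
  case 0
  then have "nn = (\<lambda>_. 0)" "mm = (\<lambda>_. 0)" "n = 0"
    by (auto simp: states_0 split: if_splits)
  then show ?case
    by (intro exI[of _ 1]) (simp add: kraw_inner_def states_1 multinom_1 kraw_prod_1 falling_def)
next
  case (Suc e)
  define S' where "S' = (\<Sum>i=1..Suc e. ptail p i)"
  define S where "S = (\<Sum>i=1..Suc (Suc e). p i)"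
  define k where "k = nn 1"
  define m where "m = n - nn 1"
  have S: "S = p 1 + S'"
    unfolding S'_def S_def by (rule sum_ptail)
  have tail_pos: "\<forall>i\<in>{1..Suc e}. ptail p i > 0"
    using Suc.prems(1) by (auto simp: ptail_def)
  have pos: "p 1 > 0" "S' > 0"
    using Suc.prems(1) unfolding S'_def by (simp, intro sum_pos) (use tail_pos in auto)
  then have S_pos: "S > 0"
    unfolding S by simp
  have nn_tail: "nn 1 \<le> n" "vtail nn \<in> states e m"
    using vtail_in_states[OF Suc.prems(2)] unfolding m_def by auto
  have mm_tail: "vtail mm \<in> states e (n' - mm 1)"
    using vtail_in_states[OF Suc.prems(3)] by auto
  obtain c' where c': "c' > 0" "\<And>L. kraw_inner (Suc e) L (ptail p) (vtail nn) (vtail mm)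
      = (if vtail nn = vtail mm then c' * falling (real L) m * S' ^ L else 0)"
    using Suc.IH[OF tail_pos nn_tail(2) mm_tail] unfolding S'_def by blast
  define c where "c = c' * fact k * (S' / p 1) ^ k * (S' / S) ^ m"
  have "c > 0"
    unfolding c_def using c'(1) pos S_pos by simp
  moreover have "kraw_inner (Suc (Suc e)) L p nn mm = (if nn = mm then c * falling (real L) n * S ^ L else 0)" for L
  proof (cases "vtail nn = vtail mm")
    case False
    then show ?thesis
      unfolding kraw_inner_Suc c'(2) by auto
  next
    case True
    have sums: "(\<Sum>i=1..e. vtail nn i) = m" "(\<Sum>i=1..e. vtail mm i) = m"
      using sum_states[OF nn_tail(2)] True by simp_all
    have eq_iff: "nn = mm \<longleftrightarrow> k = mm 1"
      using vcons_vtail[of nn] vcons_vtail[of mm] True Suc.prems(2,3) unfolding k_def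
      by (metis states_zero_at_0)
    have n: "n = m + k"
      using nn_tail(1) unfolding m_def k_def by simp
    have "kraw_inner (Suc (Suc e)) L p nn mm = c' * (\<Sum>a=0..L. real (L choose a) * falling (real (L - a)) m
        * S' ^ (L - a) * p 1 ^ a * kraw_scaled k (real a) (real L - real m) (p 1 / (p 1 + S'))
        * kraw_scaled (mm 1) (real a) (real L - real m) (p 1 / (p 1 + S')))"
      unfolding kraw_inner_Suc c'(2) sums sum_distrib_left S_def[symmetric] S k_def
      using True by (intro sum.cong refl) (simp add: mult_ac)
    also have "\<dots> = c' * (if k = mm 1 then fact k * (S' / p 1) ^ k * S' ^ m * falling (real L) (m + k)
        * (p 1 + S') ^ (L - m) else 0)"
      using binomial_falling_kraw_inner[of "p 1" S'] pos by simp
    also have "\<dots> = (if nn = mm then c * falling (real L) n * S ^ L else 0)"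
    proof (cases "m \<le> L")
      case True
      then have "S ^ L = S ^ m * S ^ (L - m)" "(S' / S) ^ m * S ^ m = S' ^ m"
        using S_pos by (simp_all add: power_add[symmetric] power_divide)
      then show ?thesis
        unfolding eq_iff n c_def S[symmetric] by (simp add: mult_ac)
    next
      case False
      then show ?thesis
        unfolding eq_iff n by (simp add: falling_of_nat_eq_0)
    qed
    finally show ?thesis .
  qed
  ultimately show ?case
    unfolding S_def by blast
qed

lemma multinom_hypergeometric:
  assumes x: "x \<in> states d N" and k: "k \<in> states d s" and "\<forall>i. k i \<le> x i" "s \<le> N"
  shows "multinom d N p x * (\<Prod>i=1..d. real (x i choose k i)) / real (N choose s)
       = multinom d (N - s) p (\<lambda>i. x i - k i) * multinom d s p k"
proof -
  have binom: "(\<Prod>i=1..d. real (x i choose k i))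
      = (\<Prod>i=1..d. fact (x i)) / ((\<Prod>i=1..d. fact (k i)) * (\<Prod>i=1..d. fact (x i - k i)))"
    using assms(3) by (simp add: binomial_fact prod_dividef prod.distrib)
  have powers: "(\<Prod>i=1..d. p i ^ x i) = (\<Prod>i=1..d. p i ^ (x i - k i)) * (\<Prod>i=1..d. p i ^ k i)"
    unfolding prod.distrib[symmetric] using assms(3) by (intro prod.cong refl) (simp add: power_add[symmetric])
  have binom_N: "real (N choose s) = fact N / (fact s * fact (N - s))"
    using assms(4) by (rule binomial_fact)
  have "(\<Prod>i=1..d. fact (x i) :: real) \<noteq> 0" "(\<Prod>i=1..d. fact (k i) :: real) \<noteq> 0"
     "(\<Prod>i=1..d. fact (x i - k i) :: real) \<noteq> 0"
    by auto
  then show ?thesis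
    unfolding multinom_def binom powers binom_N sum_states[OF x] sum_states[OF k] by (simp add: field_simps)
qed

lemma ehrenfest_apply:
  assumes x: "x \<in> states d N" and sN: "s \<le> N"
  shows "(\<Sum>y\<in>states d N. ehrenfest d N s p x y * f y) =
    (\<Sum>k\<in>states d s. if \<forall>i. k i \<le> x i then (\<Prod>i=1..d. real (x i choose k i)) / real (N choose s) *
        (\<Sum>m\<in>states d s. multinom d s p m * f (\<lambda>i. x i - k i + m i)) else 0)"
proof -
  have move: "(\<Sum>y\<in>states d N. (if (\<forall>i. k i \<le> x i) \<and> (\<forall>i. x i - k i + m i = y i) then c else 0) * f y)
      = (if \<forall>i. k i \<le> x i then c * f (\<lambda>i. x i - k i + m i) else 0)"
    if k: "k \<in> states d s" and m: "m \<in> states d s" for k m c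
  proof (cases "\<forall>i. k i \<le> x i")
    case True
    then have "(\<lambda>i. x i - k i + m i) \<in> states d N"
      using add_in_states[OF diff_in_states[OF x k True] m] sN by simp
    moreover have "(\<forall>i. x i - k i + m i = y i) \<longleftrightarrow> (\<lambda>i. x i - k i + m i) = y" for y
      by (auto simp: fun_eq_iff)
    ultimately show ?thesis
      using True by (simp add: if_distrib[of "\<lambda>t. t * f _"] sum.delta finite_states cong: if_cong)
  next
    case False
    then show ?thesis
      by (intro trans[OF sum.neutral]) auto
  qed
  have "(\<Sum>y\<in>states d N. ehrenfest d N s p x y * f y) =
     (\<Sum>k\<in>states d s. \<Sum>m\<in>states d s. \<Sum>y\<in>states d N.
        (if (\<forall>i. k i \<le> x i) \<and> (\<forall>i. x i - k i + m i = y i)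
        then (\<Prod>i=1..d. real (x i choose k i)) / real (N choose s) * multinom d s p m
        else 0) * f y)"
    unfolding ehrenfest_def sum_distrib_right by (subst sum.swap) (subst (2) sum.swap, rule refl)
  also have "\<dots> = (\<Sum>k\<in>states d s. \<Sum>m\<in>states d s. if \<forall>i. k i \<le> x i then
        (\<Prod>i=1..d. real (x i choose k i)) / real (N choose s) * multinom d s p m * f (\<lambda>i. x i - k i + m i) else 0)"
    by (intro sum.cong refl move)
  also have "\<dots> = (\<Sum>k\<in>states d s. if \<forall>i. k i \<le> x i then (\<Prod>i=1..d. real (x i choose k i)) / real (N choose s) *
        (\<Sum>m\<in>states d s. multinom d s p m * f (\<lambda>i. x i - k i + m i)) else 0)"
  proof (intro sum.cong refl)
    fix k
    show "(\<Sum>m\<in>states d s. if \<forall>i. k i \<le> x i then (\<Prod>i=1..d. real (x i choose k i)) / real (N choose s)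
          * multinom d s p m * f (\<lambda>i. x i - k i + m i) else 0)
      = (if \<forall>i. k i \<le> x i then (\<Prod>i=1..d. real (x i choose k i)) / real (N choose s) *
          (\<Sum>m\<in>states d s. multinom d s p m * f (\<lambda>i. x i - k i + m i)) else 0)"
    proof (cases "\<forall>i. k i \<le> x i")
      case True
      then show ?thesis
        by (simp add: sum_distrib_left mult_ac)
    next
      case False
      then have no: "(\<forall>i. k i \<le> x i) = False"
        by simp
      show ?thesis
        unfolding no by simp
    qed
  qed
  finally show ?thesis .
qed

lemma multinom_ehrenfest_apply:
  assumes x: "x \<in> states d N" and sN: "s \<le> N"
  shows "multinom d N p x * (\<Sum>y\<in>states d N. ehrenfest d N s p x y * f y)
    = (\<Sum>k\<in>states d s. if \<forall>i. k i \<le> x i then multinom d (N - s) p (\<lambda>i. x i - k i) * multinom d s p k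
        * (\<Sum>m\<in>states d s. multinom d s p m * f (\<lambda>i. x i - k i + m i)) else 0)"
  unfolding ehrenfest_apply[OF x sN] sum_distrib_left[of "multinom d N p x"]
proof (intro sum.cong refl)
  fix k assume k: "k \<in> states d s"
  show "multinom d N p x * (if \<forall>i. k i \<le> x i then (\<Prod>i=1..d. real (x i choose k i)) / real (N choose s)
        * (\<Sum>m\<in>states d s. multinom d s p m * f (\<lambda>i. x i - k i + m i)) else 0)
    = (if \<forall>i. k i \<le> x i then multinom d (N - s) p (\<lambda>i. x i - k i) * multinom d s p k
        * (\<Sum>m\<in>states d s. multinom d s p m * f (\<lambda>i. x i - k i + m i)) else 0)"
  proof (cases "\<forall>i. k i \<le> x i")
    case True
    let ?S = "\<Sum>m\<in>states d s. multinom d s p m * f (\<lambda>i. x i - k i + m i)"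
    have "multinom d N p x * (if \<forall>i. k i \<le> x i then (\<Prod>i=1..d. real (x i choose k i)) / real (N choose s) * ?S else 0)
      = multinom d N p x * (\<Prod>i=1..d. real (x i choose k i)) / real (N choose s) * ?S"
      using True by simp
    also have "\<dots> = multinom d (N - s) p (\<lambda>i. x i - k i) * multinom d s p k * ?S"
      unfolding multinom_hypergeometric[OF x k True sN] ..
    finally show ?thesis
      using True by simp
  next
    case False
    then have no: "(\<forall>i. k i \<le> x i) = False"
      by simp
    show ?thesis
      unfolding no by simp
  qed
qed

lemma sum_states_reindex_sub:
  assumes sN: "s \<le> N"
  shows "(\<Sum>x\<in>states d N. \<Sum>k\<in>states d s. if \<forall>i. k i \<le> x i then F x k else (0::real))
       = (\<Sum>z\<in>states d (N - s). \<Sum>k\<in>states d s. F (\<lambda>i. z i + k i) k)"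
proof -
  define A where "A = {(x, k). x \<in> states d N \<and> k \<in> states d s \<and> (\<forall>i. k i \<le> x i)}"
  have "(\<Sum>x\<in>states d N. \<Sum>k\<in>states d s. if \<forall>i. k i \<le> x i then F x k else 0) = (\<Sum>(x, k)\<in>A. F x k)"
    unfolding A_def sum.cartesian_product
    by (rule sum.mono_neutral_cong_right) (auto simp: finite_states split: if_splits)
  also have "\<dots> = (\<Sum>(z, k)\<in>states d (N - s) \<times> states d s. F (\<lambda>i. z i + k i) k)"
  proof (rule sum.reindex_bij_witness[where i = "\<lambda>(z, k). (\<lambda>i. z i + k i, k)" and j = "\<lambda>(x, k). (\<lambda>i. x i - k i, k)"])
    fix b assume "b \<in> states d (N - s) \<times> states d s"
    then show "(\<lambda>(z, k). (\<lambda>i. z i + k i, k)) b \<in> A"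
      unfolding A_def using add_in_states[of "fst b" d "N - s" "snd b" s] sN by auto
  next
    fix a assume "a \<in> A"
    then have "(\<lambda>i. fst a i - snd a i + snd a i) = fst a"
      unfolding A_def by auto
    then show "(\<lambda>(z, k). F (\<lambda>i. z i + k i) k) ((\<lambda>(x, k). (\<lambda>i. x i - k i, k)) a) = (\<lambda>(x, k). F x k) a"
      by (auto simp: split_beta)
  qed (auto simp: A_def diff_in_states)
  finally show ?thesis
    by (simp add: sum.cartesian_product)
qed

text \<open>One step of the chain turns the inner product of two product polynomials with \<open>N\<close> balls
  into the same inner product with \<open>N - s\<close> balls: the \<open>s\<close> removed balls are hypergeometric, and the
  redistributed ones are averaged out by \<open>kraw_prod_multinomial_mean\<close>.\<close>

lemma kraw_inner_ehrenfest:
  assumes pos: "\<forall>i\<in>{1..Suc e}. p i > 0" and sum_p: "(\<Sum>i=1..Suc e. p i) = 1" and sN: "s \<le> N"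
  shows "(\<Sum>x\<in>states (Suc e) N. multinom (Suc e) N p x * kraw_prod (Suc e) (real N) p mm x *
          (\<Sum>y\<in>states (Suc e) N. ehrenfest (Suc e) N s p x y * kraw_prod (Suc e) (real N) p nn y))
       = kraw_inner (Suc e) (N - s) p nn mm"
proof -
  let ?d = "Suc e"
  let ?P = "\<lambda>L nn. kraw_prod ?d L p nn"
  have mean: "(\<Sum>m\<in>states ?d s. multinom ?d s p m * ?P (real N) nn (\<lambda>i. z i + m i)) = ?P (real (N - s)) nn z"
    for nn z
    using kraw_prod_multinomial_mean[OF pos, of s "real N" nn z, unfolded sum_p] sN by (simp add: of_nat_diff)
  have "(\<Sum>x\<in>states ?d N. multinom ?d N p x * ?P (real N) mm x *
          (\<Sum>y\<in>states ?d N. ehrenfest ?d N s p x y * ?P (real N) nn y))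
     = (\<Sum>x\<in>states ?d N. \<Sum>k\<in>states ?d s. if \<forall>i. k i \<le> x i then ?P (real N) mm x *
          (multinom ?d (N - s) p (\<lambda>i. x i - k i) * multinom ?d s p k
          * (\<Sum>m\<in>states ?d s. multinom ?d s p m * ?P (real N) nn (\<lambda>i. x i - k i + m i))) else 0)"
  proof (intro sum.cong refl)
    fix x assume x: "x \<in> states ?d N"
    have "multinom ?d N p x * ?P (real N) mm x * (\<Sum>y\<in>states ?d N. ehrenfest ?d N s p x y * ?P (real N) nn y)
      = ?P (real N) mm x * (multinom ?d N p x * (\<Sum>y\<in>states ?d N. ehrenfest ?d N s p x y * ?P (real N) nn y))"
      by (simp only: mult_ac)
    then show "multinom ?d N p x * ?P (real N) mm x * (\<Sum>y\<in>states ?d N. ehrenfest ?d N s p x y * ?P (real N) nn y)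
      = (\<Sum>k\<in>states ?d s. if \<forall>i. k i \<le> x i then ?P (real N) mm x *
          (multinom ?d (N - s) p (\<lambda>i. x i - k i) * multinom ?d s p k
          * (\<Sum>m\<in>states ?d s. multinom ?d s p m * ?P (real N) nn (\<lambda>i. x i - k i + m i))) else 0)"
      unfolding multinom_ehrenfest_apply[OF x sN] by (simp add: sum_distrib_left if_distrib[of "(*) _"] cong: if_cong)
  qed
  also have "\<dots> = (\<Sum>z\<in>states ?d (N - s). \<Sum>k\<in>states ?d s. multinom ?d (N - s) p z * ?P (real (N - s)) nn z *
         (multinom ?d s p k * ?P (real N) mm (\<lambda>i. z i + k i)))"
    unfolding sum_states_reindex_sub[OF sN] by (simp add: mean mult_ac)
  also have "\<dots> = (\<Sum>z\<in>states ?d (N - s). multinom ?d (N - s) p z * ?P (real (N - s)) nn z *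
         (\<Sum>k\<in>states ?d s. multinom ?d s p k * ?P (real N) mm (\<lambda>i. z i + k i)))"
    by (simp add: sum_distrib_left)
  also have "\<dots> = kraw_inner ?d (N - s) p nn mm"
    unfolding mean kraw_inner_def by (simp add: mult_ac)
  finally show ?thesis .
qed

section \<open>Orthogonal bases of functions on a finite set\<close>

lemma sum_nth_distinct: "distinct xs \<Longrightarrow> (\<Sum>b\<in>{0..<length xs}. f (xs ! b)) = (\<Sum>x\<in>set xs. f x)"
  using sum.reindex_bij_betw[OF bij_betw_nth[of xs "{..<length xs}" "set xs"], of f]
  by (simp add: atLeast0LessThan)

text \<open>The weights \<open>\<pi>\<close> need not be positive: completeness only uses that the square matrix
  \<open>(P i x)\<close> has a one-sided inverse, hence a two-sided one.\<close>

locale orthogonal_basis =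
  fixes X :: "'x set" and I :: "'i set" and \<pi> :: "'x \<Rightarrow> real" and P :: "'i \<Rightarrow> 'x \<Rightarrow> real" and w :: "'i \<Rightarrow> real"
  assumes finite_X: "finite X" and finite_I: "finite I" and card_I: "card I = card X"
    and orthogonal: "i \<in> I \<Longrightarrow> j \<in> I \<Longrightarrow> (\<Sum>x\<in>X. \<pi> x * P i x * P j x) = (if i = j then w i else 0)"
    and w_nonzero: "i \<in> I \<Longrightarrow> w i \<noteq> 0"
begin

lemma completeness:
  assumes "x \<in> X" "y \<in> X"
  shows "(\<Sum>i\<in>I. \<pi> x * P i x * P i y / w i) = (if x = y then 1 else 0)"
proof -
  obtain xs where xs: "distinct xs" "set xs = X"
    using finite_distinct_list[OF finite_X] by blast
  obtain js where js: "distinct js" "set js = I"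
    using finite_distinct_list[OF finite_I] by blast
  define n where "n = length xs"
  have ln: "length js = n"
    using distinct_card[OF xs(1)] distinct_card[OF js(1)] card_I xs js n_def by simp
  define A where "A = mat n n (\<lambda>(a, b). P (js ! a) (xs ! b))"
  define B where "B = mat n n (\<lambda>(b, a). \<pi> (xs ! b) * P (js ! a) (xs ! b) / w (js ! a))"
  have AB: "A * B = 1\<^sub>m n"
  proof (rule eq_matI)
    fix a a' assume "a < dim_row (1\<^sub>m n :: real mat)" "a' < dim_col (1\<^sub>m n :: real mat)"
    then have a: "a < n" "a' < n"
      by auto
    then have ia: "js ! a \<in> I" "js ! a' \<in> I"
      using ln js by auto
    have "(A * B) $$ (a, a') = (\<Sum>b\<in>{0..<n}. P (js ! a) (xs ! b) * (\<pi> (xs ! b) * P (js ! a') (xs ! b) / w (js ! a')))"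
      using a unfolding A_def B_def by (simp add: scalar_prod_def)
    also have "\<dots> = (\<Sum>z\<in>X. \<pi> z * P (js ! a) z * P (js ! a') z) / w (js ! a')"
      unfolding n_def sum_nth_distinct[OF xs(1), of "\<lambda>z. P (js ! a) z * (\<pi> z * P (js ! a') z / w (js ! a'))"] xs(2)
      by (simp add: sum_divide_distrib mult_ac)
    also have "\<dots> = (if a = a' then 1 else 0)"
      unfolding orthogonal[OF ia] using w_nonzero[OF ia(1)] nth_eq_iff_index_eq[OF js(1)] a ln by auto
    finally show "(A * B) $$ (a, a') = 1\<^sub>m n $$ (a, a')"
      using a by simp
  qed (auto simp: A_def B_def)
  have BA: "B * A = 1\<^sub>m n"
    by (rule mat_mult_left_right_inverse[OF _ _ AB]) (auto simp: A_def B_def)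
  obtain b b' where b: "b < n" "xs ! b = x" "b' < n" "xs ! b' = y"
    using assms xs unfolding n_def by (metis in_set_conv_nth)
  have "(\<Sum>i\<in>I. \<pi> x * P i x * P i y / w i)
      = (\<Sum>a\<in>{0..<n}. \<pi> (xs ! b) * P (js ! a) (xs ! b) / w (js ! a) * P (js ! a) (xs ! b'))"
    using sum_nth_distinct[OF js(1), of "\<lambda>i. \<pi> x * P i x / w i * P i y"] js(2) ln b by (simp add: mult_ac)
  also have "\<dots> = (B * A) $$ (b, b')"
    using b unfolding A_def B_def by (simp add: scalar_prod_def)
  also have "\<dots> = (if x = y then 1 else 0)"
    unfolding BA using b nth_eq_iff_index_eq[OF xs(1)] unfolding n_def by auto
  finally show ?thesis .
qed

lemma expansion:
  assumes "y \<in> X"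
  shows "f y = (\<Sum>i\<in>I. (\<Sum>x\<in>X. \<pi> x * f x * P i x) / w i * P i y)"
proof -
  have "f y = (\<Sum>x\<in>X. f x * (if x = y then 1 else 0))"
    using assms finite_X by (simp add: if_distrib[of "\<lambda>t. _ * t"] cong: if_cong)
  also have "\<dots> = (\<Sum>x\<in>X. f x * (\<Sum>i\<in>I. \<pi> x * P i x * P i y / w i))"
    using completeness assms by (intro sum.cong refl) simp
  also have "\<dots> = (\<Sum>i\<in>I. (\<Sum>x\<in>X. \<pi> x * f x * P i x) / w i * P i y)"
    unfolding sum_distrib_left sum_distrib_right sum_divide_distrib by (subst sum.swap) (simp add: mult_ac)
  finally show ?thesis .
qed

lemma spanning: "\<exists>c. \<forall>x\<in>X. f x = (\<Sum>i\<in>I. c i * P i x)"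
proof (intro exI ballI)
  fix y assume "y \<in> X"
  then show "f y = (\<Sum>i\<in>I. (\<Sum>x\<in>X. \<pi> x * f x * P i x) / w i * P i y)"
    by (rule expansion)
qed

lemma eq_0_if_orthogonal:
  assumes "\<And>i. i \<in> I \<Longrightarrow> (\<Sum>x\<in>X. \<pi> x * g x * P i x) = 0" "y \<in> X"
  shows "g y = 0"
  using expansion[OF assms(2), of g] assms(1) by simp

lemma linearly_independent:
  assumes "\<And>x. x \<in> X \<Longrightarrow> (\<Sum>i\<in>I. c i * P i x) = 0" "j \<in> I"
  shows "c j = 0"
proof -
  have "0 = (\<Sum>x\<in>X. \<pi> x * P j x * (\<Sum>i\<in>I. c i * P i x))"
    using assms(1) by simp
  also have "\<dots> = (\<Sum>i\<in>I. c i * (\<Sum>x\<in>X. \<pi> x * P i x * P j x))"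
    unfolding sum_distrib_left by (subst sum.swap) (simp add: mult_ac)
  also have "\<dots> = c j * w j"
    using assms(2) finite_I by (simp add: orthogonal if_distrib[of "\<lambda>t. _ * t"] cong: if_cong)
  finally show ?thesis
    using w_nonzero[OF assms(2)] by simp
qed

lemma eigenvector_if_inner:
  assumes "i \<in> I" "x \<in> X"
    and "\<And>j. j \<in> I \<Longrightarrow> (\<Sum>x\<in>X. \<pi> x * P j x * (\<Sum>y\<in>X. T x y * P i y)) = \<beta> * (\<Sum>x\<in>X. \<pi> x * P j x * P i x)"
  shows "(\<Sum>y\<in>X. T x y * P i y) = \<beta> * P i x"
proof -
  have "(\<Sum>y\<in>X. T x y * P i y) - \<beta> * P i x = 0"
  proof (rule eq_0_if_orthogonal[OF _ assms(2)])
    fix j assume "j \<in> I"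
    then show "(\<Sum>x\<in>X. \<pi> x * ((\<Sum>y\<in>X. T x y * P i y) - \<beta> * P i x) * P j x) = 0"
      using assms(3)[of j] by (simp add: algebra_simps sum_subtractf sum_distrib_left)
  qed
  then show ?thesis
    by simp
qed

context
  fixes T :: "'x \<Rightarrow> 'x \<Rightarrow> real" and \<beta> :: "'i \<Rightarrow> real"
  assumes eigen: "\<And>i x. i \<in> I \<Longrightarrow> x \<in> X \<Longrightarrow> (\<Sum>y\<in>X. T x y * P i y) = \<beta> i * P i x"
begin

text \<open>Completeness applied to \<open>y\<close> (not \<open>x\<close>) puts the weight \<open>\<pi> y\<close> in front.\<close>

lemma kernel_expansion:
  assumes "x \<in> X" "y \<in> X"
  shows "T x y = \<pi> y * (\<Sum>i\<in>I. \<beta> i * P i x * P i y / w i)"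
proof -
  have "T x y = (\<Sum>z\<in>X. T x z * (if y = z then 1 else 0))"
    using assms finite_X by (simp add: if_distrib[of "\<lambda>t. _ * t"] cong: if_cong)
  also have "\<dots> = (\<Sum>z\<in>X. T x z * (\<Sum>i\<in>I. \<pi> y * P i y * P i z / w i))"
    using completeness assms by (intro sum.cong refl) simp
  also have "\<dots> = \<pi> y * (\<Sum>i\<in>I. P i y / w i * (\<Sum>z\<in>X. T x z * P i z))"
    unfolding sum_distrib_left sum_divide_distrib by (subst sum.swap) (simp add: mult_ac)
  also have "\<dots> = \<pi> y * (\<Sum>i\<in>I. \<beta> i * P i x * P i y / w i)"
    using eigen assms by (simp add: mult_ac)
  finally show ?thesis .
qed

lemma left_eigenvector:
  assumes "i \<in> I" "y \<in> X"
  shows "(\<Sum>z\<in>X. \<pi> z * P i z * T z y) = \<beta> i * \<pi> y * P i y"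
proof -
  have "(\<Sum>z\<in>X. \<pi> z * P i z * T z y)
      = (\<Sum>z\<in>X. \<Sum>j\<in>I. \<pi> y * (\<beta> j * P j y / w j) * (\<pi> z * P i z * P j z))"
    using kernel_expansion assms(2) by (intro sum.cong refl) (simp add: sum_distrib_left mult_ac)
  also have "\<dots> = \<pi> y * (\<Sum>j\<in>I. \<beta> j * P j y / w j * (\<Sum>z\<in>X. \<pi> z * P i z * P j z))"
    by (subst sum.swap) (simp add: sum_distrib_left mult_ac)
  also have "\<dots> = \<beta> i * \<pi> y * P i y"
    using assms(1) finite_I w_nonzero[OF assms(1)]
    by (simp add: orthogonal if_distrib[of "\<lambda>t. _ * t"] cong: if_cong)
  finally show ?thesis .
qed

lemma kernel_power_expansion:
  assumes Q_0: "\<And>x y. Q 0 x y = (if x = y then 1 else 0)"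
    and Q_Suc: "\<And>l x y. Q (Suc l) x y = (\<Sum>z\<in>X. Q l x z * T z y)"
    and "x \<in> X" "y \<in> X"
  shows "Q l x y = \<pi> y * (\<Sum>i\<in>I. \<beta> i ^ l * P i x * P i y / w i)"
  using assms(4)
proof (induction l arbitrary: y)
  case 0
  then show ?case
    using completeness[OF _ assms(3), of y] by (simp add: Q_0 sum_distrib_left mult_ac)
next
  case (Suc l)
  have "Q (Suc l) x y = (\<Sum>z\<in>X. \<Sum>i\<in>I. \<beta> i ^ l * P i x / w i * (\<pi> z * P i z * T z y))"
    unfolding Q_Suc by (intro sum.cong refl) (simp add: Suc.IH sum_distrib_left sum_distrib_right mult_ac)
  also have "\<dots> = (\<Sum>i\<in>I. \<beta> i ^ l * P i x / w i * (\<Sum>z\<in>X. \<pi> z * P i z * T z y))"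
    by (subst sum.swap) (simp add: sum_distrib_left)
  also have "\<dots> = (\<Sum>i\<in>I. \<beta> i ^ l * P i x / w i * (\<beta> i * \<pi> y * P i y))"
    using left_eigenvector Suc.prems by (intro sum.cong refl) simp
  also have "\<dots> = \<pi> y * (\<Sum>i\<in>I. \<beta> i ^ Suc l * P i x * P i y / w i)"
    by (simp add: sum_distrib_left mult_ac)
  finally show ?case .
qed

lemma chi_square_expansion:
  assumes Q_0: "\<And>x y. Q 0 x y = (if x = y then 1 else 0)"
    and Q_Suc: "\<And>l x y. Q (Suc l) x y = (\<Sum>z\<in>X. Q l x z * T z y)"
    and pos: "\<And>y. y \<in> X \<Longrightarrow> \<pi> y > 0" and sum_\<pi>: "(\<Sum>y\<in>X. \<pi> y) = 1"
    and i0: "i0 \<in> I" "\<beta> i0 = 1" "\<And>x. x \<in> X \<Longrightarrow> P i0 x = 1"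
    and x: "x \<in> X"
  shows "(\<Sum>y\<in>X. (Q l x y - \<pi> y)\<^sup>2 / \<pi> y) = (\<Sum>i\<in>I - {i0}. \<beta> i ^ (2 * l) * (P i x * P i x / w i))"
proof -
  define a where "a i = \<beta> i ^ l * P i x / w i" for i
  define A where "A y = (\<Sum>i\<in>I - {i0}. a i * P i y)" for y
  have w_i0: "w i0 = 1"
    using orthogonal[OF i0(1) i0(1)] i0(3) sum_\<pi> by simp
  have deviation: "Q l x y - \<pi> y = \<pi> y * A y" if "y \<in> X" for y
    using kernel_power_expansion[OF Q_0 Q_Suc x that] i0 x that w_i0
    unfolding A_def a_def by (simp add: sum.remove[OF finite_I i0(1)] algebra_simps)
  have "(\<Sum>y\<in>X. (Q l x y - \<pi> y)\<^sup>2 / \<pi> y) = (\<Sum>y\<in>X. \<pi> y * A y * A y)"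
    using pos by (intro sum.cong refl) (simp add: deviation power2_eq_square)
  also have "\<dots> = (\<Sum>i\<in>I - {i0}. \<Sum>j\<in>I - {i0}. a i * a j * (\<Sum>y\<in>X. \<pi> y * P i y * P j y))"
    unfolding A_def sum_distrib_left sum_distrib_right
    by (subst sum.swap) (simp add: sum.swap[of _ X] mult_ac)
  also have "\<dots> = (\<Sum>i\<in>I - {i0}. a i * a i * w i)"
    using finite_I by (intro sum.cong refl) (simp add: orthogonal if_distrib[of "\<lambda>t. _ * t"] cong: if_cong)
  also have "\<dots> = (\<Sum>i\<in>I - {i0}. \<beta> i ^ (2 * l) * (P i x * P i x / w i))"
    using w_nonzero unfolding a_def by (intro sum.cong refl) (simp add: power_mult power2_eq_square field_simps)
  finally show ?thesis .
qed

end

end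

section \<open>The generalized Ehrenfest urn\<close>

lemma multinom_pos: "\<forall>i\<in>{1..d}. p i > 0 \<Longrightarrow> multinom d N p y > 0"
  unfolding multinom_def by (auto intro!: mult_pos_pos divide_pos_pos prod_pos)

lemma mkraw_zero: "mkraw (Suc e) N p (\<lambda>_. 0) x = 1"
  unfolding mkraw_eq_kraw_prod mkraw_factor_def kraw_prod_zero by (simp add: falling_def)

lemma sum_multinom_mkraw:
  "(\<Sum>x\<in>states (Suc e) N. multinom (Suc e) N p x * mkraw (Suc e) N p nn x * mkraw (Suc e) N p mm x)
    = mkraw_factor e N nn * mkraw_factor e N mm * kraw_inner (Suc e) N p nn mm"
  unfolding kraw_inner_def mkraw_eq_kraw_prod sum_distrib_left by (simp add: mult_ac)

locale ehrenfest_urn =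
  fixes e N s :: nat and p :: "nat \<Rightarrow> real"
  assumes prob_vec: "prob_vec (Suc e) p" and s_le_N: "s \<le> N"
begin

lemma p_pos: "\<forall>i\<in>{1..Suc e}. p i > 0" and sum_p: "(\<Sum>i=1..Suc e. p i) = 1"
  using prob_vec unfolding prob_vec_def by auto

lemma kraw_inner_states_upto:
  assumes "nn \<in> states_upto e N" "mm \<in> states_upto e N"
  shows "kraw_inner (Suc e) N p nn mm = (if nn = mm then kraw_inner (Suc e) N p nn nn else 0)"
    and "kraw_inner (Suc e) N p nn nn > 0"
proof -
  obtain n n' where "n \<le> N" "nn \<in> states e n" "mm \<in> states e n'"
    using assms unfolding states_upto_def by auto
  with kraw_inner_orthogonal[OF p_pos] obtain c where c: "c > 0"
    "\<And>L. kraw_inner (Suc e) L p nn mm = (if nn = mm then c * falling (real L) n else 0)"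
    "\<And>L. kraw_inner (Suc e) L p nn nn = c * falling (real L) n"
    unfolding sum_p power_one mult_1_right by metis
  show "kraw_inner (Suc e) N p nn mm = (if nn = mm then kraw_inner (Suc e) N p nn nn else 0)"
    using c(2,3) by (cases "nn = mm") simp_all
  show "kraw_inner (Suc e) N p nn nn > 0"
    using c(1,3) falling_of_nat_pos[OF \<open>n \<le> N\<close>] by simp
qed

sublocale mkraw: orthogonal_basis "states (Suc e) N" "states_upto e N" "multinom (Suc e) N p" "mkraw (Suc e) N p"
  "\<lambda>nn. \<Sum>z\<in>states (Suc e) N. multinom (Suc e) N p z * (mkraw (Suc e) N p nn z)\<^sup>2"
proof
  fix nn mm assume nn: "nn \<in> states_upto e N" and mm: "mm \<in> states_upto e N"
  show "(\<Sum>x\<in>states (Suc e) N. multinom (Suc e) N p x * mkraw (Suc e) N p nn x * mkraw (Suc e) N p mm x)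
    = (if nn = mm then \<Sum>z\<in>states (Suc e) N. multinom (Suc e) N p z * (mkraw (Suc e) N p nn z)\<^sup>2 else 0)"
  proof (cases "nn = mm")
    case True
    then show ?thesis
      by (simp add: power2_eq_square mult.assoc)
  next
    case False
    then show ?thesis
      unfolding sum_multinom_mkraw using kraw_inner_states_upto(1)[OF nn mm] by simp
  qed
  have "(\<Sum>z\<in>states (Suc e) N. multinom (Suc e) N p z * (mkraw (Suc e) N p nn z)\<^sup>2)
      = (mkraw_factor e N nn)\<^sup>2 * kraw_inner (Suc e) N p nn nn"
    using sum_multinom_mkraw[of e N p nn nn] by (simp add: power2_eq_square mult.assoc)
  then show "(\<Sum>z\<in>states (Suc e) N. multinom (Suc e) N p z * (mkraw (Suc e) N p nn z)\<^sup>2) \<noteq> 0"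
    using mkraw_factor_nonzero[OF nn] kraw_inner_states_upto(2)[OF nn nn] by simp
qed (simp_all add: finite_states finite_states_upto card_states_upto)

lemma kraw_inner_minus_eq_ehr_beta:
  assumes "nn \<in> states e n" "n \<le> N" "mm \<in> states e n'"
  shows "kraw_inner (Suc e) (N - s) p nn mm = ehr_beta N s n * kraw_inner (Suc e) N p nn mm"
proof -
  obtain c where c: "\<And>L. kraw_inner (Suc e) L p nn mm = (if nn = mm then c * falling (real L) n else 0)"
    using kraw_inner_orthogonal[OF p_pos assms(1,3)] unfolding sum_p power_one mult_1_right by blast
  have "falling (real N) n \<noteq> 0"
    using falling_of_nat_pos[OF assms(2)] by simp
  then show ?thesis
    unfolding c ehr_beta_def using s_le_N by (simp add: of_nat_diff)
qed

lemma mkraw_eigen: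
  assumes nn: "nn \<in> states e n" and "n \<le> N" and x: "x \<in> states (Suc e) N"
  shows "(\<Sum>y\<in>states (Suc e) N. ehrenfest (Suc e) N s p x y * mkraw (Suc e) N p nn y)
    = ehr_beta N s n * mkraw (Suc e) N p nn x"
proof (rule mkraw.eigenvector_if_inner[OF _ x])
  show "nn \<in> states_upto e N"
    using assms unfolding states_upto_def by auto
next
  fix mm assume "mm \<in> states_upto e N"
  then obtain n' where mm: "mm \<in> states e n'"
    unfolding states_upto_def by auto
  have "(\<Sum>x\<in>states (Suc e) N. multinom (Suc e) N p x * mkraw (Suc e) N p mm x
        * (\<Sum>y\<in>states (Suc e) N. ehrenfest (Suc e) N s p x y * mkraw (Suc e) N p nn y))
      = mkraw_factor e N mm * mkraw_factor e N nn * (\<Sum>x\<in>states (Suc e) N. multinom (Suc e) N p x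
        * kraw_prod (Suc e) (real N) p mm x
        * (\<Sum>y\<in>states (Suc e) N. ehrenfest (Suc e) N s p x y * kraw_prod (Suc e) (real N) p nn y))"
    unfolding mkraw_eq_kraw_prod sum_distrib_left by (simp add: mult_ac)
  also have "\<dots> = ehr_beta N s n
      * (\<Sum>x\<in>states (Suc e) N. multinom (Suc e) N p x * mkraw (Suc e) N p mm x * mkraw (Suc e) N p nn x)"
    unfolding kraw_inner_ehrenfest[OF p_pos sum_p s_le_N] kraw_inner_minus_eq_ehr_beta[OF nn \<open>n \<le> N\<close> mm]
      sum_multinom_mkraw by (simp add: kraw_inner_commute mult_ac)
  finally show "(\<Sum>x\<in>states (Suc e) N. multinom (Suc e) N p x * mkraw (Suc e) N p mm x
        * (\<Sum>y\<in>states (Suc e) N. ehrenfest (Suc e) N s p x y * mkraw (Suc e) N p nn y))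
      = ehr_beta N s n
      * (\<Sum>x\<in>states (Suc e) N. multinom (Suc e) N p x * mkraw (Suc e) N p mm x * mkraw (Suc e) N p nn x)" .
qed

lemma chi_sq_eq_kernel_poly:
  assumes x: "x \<in> states (Suc e) N"
  shows "chi_sq (Suc e) N s p x l = (\<Sum>n=1..N. ehr_beta N s n ^ (2 * l) * kernel_poly (Suc e) N p n x x)"
proof -
  let ?\<beta> = "\<lambda>nn. ehr_beta N s (\<Sum>i=1..e. nn i)"
  have eigen: "(\<Sum>y\<in>states (Suc e) N. ehrenfest (Suc e) N s p x y * mkraw (Suc e) N p nn y)
      = ?\<beta> nn * mkraw (Suc e) N p nn x" if nn: "nn \<in> states_upto e N" and x: "x \<in> states (Suc e) N" for nn x
  proof -
    obtain n where n: "n \<le> N" "nn \<in> states e n"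
      using nn unfolding states_upto_def by auto
    then show ?thesis
      using mkraw_eigen[OF n(2,1) x] sum_states[OF n(2)] by simp
  qed
  have "chi_sq (Suc e) N s p x l = (\<Sum>nn\<in>states_upto e N - {\<lambda>_. 0}. ?\<beta> nn ^ (2 * l)
      * (mkraw (Suc e) N p nn x * mkraw (Suc e) N p nn x
        / (\<Sum>z\<in>states (Suc e) N. multinom (Suc e) N p z * (mkraw (Suc e) N p nn z)\<^sup>2)))"
    unfolding chi_sq_def
    by (rule mkraw.chi_square_expansion[OF eigen])
      (simp_all add: x multinom_pos[OF p_pos] sum_multinom[OF p_pos, unfolded sum_p power_one] zero_in_states_upto
        mkraw_zero ehr_beta_def falling_def)
  also have "\<dots> = (\<Sum>n=1..N. ehr_beta N s n ^ (2 * l) * kernel_poly (Suc e) N p n x x)"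
    unfolding states_upto_minus_zero kernel_poly_def sum_distrib_left
    by (subst sum.UNION_disjoint) (auto intro!: sum.cong simp: finite_states states_disjoint dest: sum_states)
  finally show ?thesis .
qed

end

theorem theorem4p24:
  fixes d N s :: nat and p :: "nat \<Rightarrow> real"
  assumes "d \<ge> 2" and "N \<ge> 1" and "s \<le> N" and "prob_vec d p"
  shows
    "(\<forall>n\<le>N. \<forall>nn\<in>states (d-1) n. \<forall>x\<in>states d N.
        (\<Sum>y\<in>states d N. ehrenfest d N s p x y * mkraw d N p nn y)
          = ehr_beta N s n * mkraw d N p nn x)
   \<and> (\<forall>n\<le>N. card (states (d-1) n) = (d + n - 2) choose n)
   \<and> (\<forall>c :: (nat \<Rightarrow> nat) \<Rightarrow> real.
        (\<forall>x\<in>states d N. (\<Sum>nn\<in>(\<Union>n\<in>{0..N}. states (d-1) n). c nn * mkraw d N p nn x) = 0)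
        \<longrightarrow> (\<forall>nn\<in>(\<Union>n\<in>{0..N}. states (d-1) n). c nn = 0))
   \<and> (\<forall>f :: (nat \<Rightarrow> nat) \<Rightarrow> real. \<exists>c :: (nat \<Rightarrow> nat) \<Rightarrow> real.
        \<forall>x\<in>states d N. f x = (\<Sum>nn\<in>(\<Union>n\<in>{0..N}. states (d-1) n). c nn * mkraw d N p nn x))
   \<and> ehr_beta N s 0 = 1 \<and> card (states (d-1) 0) = 1
   \<and> ehr_beta N s 1 = 1 - real s / real N \<and> card (states (d-1) 1) = d - 1
   \<and> (\<forall>x\<in>states d N. \<forall>l::nat.
        chi_sq d N s p x l = (\<Sum>n=1..N. ehr_beta N s n ^ (2*l) * kernel_poly d N p n x x))"
proof -
  define e where "e = d - 1"
  have d: "d = Suc e" "d - 1 = e"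
    using assms(1) unfolding e_def by simp_all
  interpret ehrenfest_urn e N s p
    using assms(3,4) by unfold_locales (simp_all add: d)
  have upto: "(\<Union>n\<in>{0..N}. states (d - 1) n) = states_upto e N"
    unfolding states_upto_def d(2) ..
  have card: "card (states (d - 1) n) = (d + n - 2) choose n" for n
    unfolding d card_states by simp
  have beta: "ehr_beta N s 0 = 1" "ehr_beta N s 1 = 1 - real s / real N"
    using assms(2) by (simp_all add: ehr_beta_def falling_def field_simps)
  show ?thesis
    unfolding upto card beta
    using mkraw_eigen mkraw.linearly_independent mkraw.spanning chi_sq_eq_kernel_poly assms(1)
    by (simp add: d)
qed

end
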